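(* Let $(X,\mathcal{A},\mu)$ be a $\sigma$-finite measure space and let $(A_n)_{n\in\mathbb{N}}$ be measurable sets of finite measure with $A_n\subseteq A_{n+1}$ for all $n$ and $X=\bigcup_{n=1}^\infty A_n$. Let $\mathcal{S}$ be the set of all measurable simple functions belonging to $L^1(X)$, and let $D:\mathcal{S}\to L^1(X)$ be a linear map. Then $D$ has a unique extension to a doubly stochastic operator on $L^1(X)$ if and only if $D$ is nonnegative (maps nonnegative functions to nonnegative functions) and for every $E\in\mathcal{A}$ with $\mu(E)<\infty$: $$\int_X D\chi_E\,d\mu=\mu(E)\qquad\text{and}\qquad \lim_{n\to\infty}\int_X \chi_E\, D\chi_{A_n}\,d\mu=\mu(E).$$
   Context: A Markov operator on $L^1(X)$ is a positive linear operator $T:L^1(X)\to L^1(X)$ with $\int_X Tf\,d\mu=\int_X f\,d\mu$ for all $f\in L^1(X)$. A Markov operator $T$ is semi-doubly stochastic if $\int_X T^*\chi_E\,d\mu\le\mu(E)$ for every $E\in\mathcal{A}$ with $\mu(E)<\infty$, where $T^*:L^\infty(X)\to L^\infty(X)$ is the Banach adjoint. A semi-doubly stochastic operator $T$ is doubly stochastic if $\int_X T^*g\,d\mu=\int_X g\,d\mu$ for each $g\in L^\infty(X)$. $\chi_E$ denotes the indicator function of $E$. *)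

theory Defs
  imports "HOL-Analysis.Analysis"
begin

text \<open>Elements of L^1(X) are represented by integrable real-valued functions;
  operators on L^1 are maps on functions that send integrable functions to
  integrable functions and respect equality almost everywhere.  All
  identities between elements of L^1 / L^infinity are a.e. identities.\<close>

definition l1_operator :: "'a measure \<Rightarrow> (('a \<Rightarrow> real) \<Rightarrow> ('a \<Rightarrow> real)) \<Rightarrow> bool" where
  "l1_operator M T \<longleftrightarrow>
     (\<forall>f. integrable M f \<longrightarrow> integrable M (T f)) \<and>
     (\<forall>f g. integrable M f \<longrightarrow> integrable M g \<longrightarrow> (AE x in M. f x = g x) \<longrightarrow>
        (AE x in M. T f x = T g x)) \<and>
     (\<forall>f g. integrable M f \<longrightarrow> integrable M g \<longrightarrow>
        (AE x in M. T (\<lambda>y. f y + g y) x = T f x + T g x)) \<and>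
     (\<forall>f c. integrable M f \<longrightarrow> (AE x in M. T (\<lambda>y. c * f y) x = c * T f x))"

definition markov_operator :: "'a measure \<Rightarrow> (('a \<Rightarrow> real) \<Rightarrow> ('a \<Rightarrow> real)) \<Rightarrow> bool" where
  "markov_operator M T \<longleftrightarrow> l1_operator M T \<and>
     (\<forall>f. integrable M f \<longrightarrow> (AE x in M. 0 \<le> f x) \<longrightarrow> (AE x in M. 0 \<le> T f x)) \<and>
     (\<forall>f. integrable M f \<longrightarrow> (\<integral>x. T f x \<partial>M) = (\<integral>x. f x \<partial>M))"

definition linf :: "'a measure \<Rightarrow> ('a \<Rightarrow> real) \<Rightarrow> bool" where
  "linf M g \<longleftrightarrow> g \<in> borel_measurable M \<and> (\<exists>C. AE x in M. \<bar>g x\<bar> \<le> C)"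

definition l1_adjoint :: "'a measure \<Rightarrow> (('a \<Rightarrow> real) \<Rightarrow> ('a \<Rightarrow> real))
    \<Rightarrow> (('a \<Rightarrow> real) \<Rightarrow> ('a \<Rightarrow> real)) \<Rightarrow> bool" where
  "l1_adjoint M T S \<longleftrightarrow>
     (\<forall>g. linf M g \<longrightarrow> linf M (S g) \<and>
        (\<forall>f. integrable M f \<longrightarrow> (\<integral>x. S g x * f x \<partial>M) = (\<integral>x. g x * T f x \<partial>M)))"

definition semi_doubly_stochastic :: "'a measure \<Rightarrow> (('a \<Rightarrow> real) \<Rightarrow> ('a \<Rightarrow> real)) \<Rightarrow> bool" where
  "semi_doubly_stochastic M T \<longleftrightarrow> markov_operator M T \<and>
     (\<exists>S. l1_adjoint M T S \<and>
        (\<forall>E\<in>sets M. emeasure M E < \<infinity> \<longrightarrow>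
           (\<integral>\<^sup>+x. ennreal (S (indicator E) x) \<partial>M) \<le> emeasure M E))"

text \<open>Doubly stochastic: \<integral> T^* g = \<integral> g for g in L^infinity, whenever \<integral> g is
  meaningful: for integrable g (Lebesgue integral) and for nonnegative g
  (extended nonnegative integral).\<close>
definition doubly_stochastic :: "'a measure \<Rightarrow> (('a \<Rightarrow> real) \<Rightarrow> ('a \<Rightarrow> real)) \<Rightarrow> bool" where
  "doubly_stochastic M T \<longleftrightarrow> semi_doubly_stochastic M T \<and>
     (\<exists>S. l1_adjoint M T S \<and>
        (\<forall>g. linf M g \<longrightarrow>
           (integrable M g \<longrightarrow> integrable M (S g) \<and>
              (\<integral>x. S g x \<partial>M) = (\<integral>x. g x \<partial>M)) \<and>
           ((AE x in M. 0 \<le> g x) \<longrightarrow>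
              (\<integral>\<^sup>+x. ennreal (S g x) \<partial>M) = (\<integral>\<^sup>+x. ennreal (g x) \<partial>M))))"

definition simple_L1 :: "'a measure \<Rightarrow> ('a \<Rightarrow> real) set" where
  "simple_L1 M = {f. simple_function M f \<and> integrable M f}"

end

theory Submission
  imports Defs
begin

text \<open>
  Necessity: a doubly stochastic \<open>T\<close> is positive and preserves integrals, and
  \<open>\<integral> \<chi>\<^sub>E \<cdot> T \<chi>\<^bsub>A n\<^esub> = \<integral> T\<^sup>* \<chi>\<^sub>E \<cdot> \<chi>\<^bsub>A n\<^esub>\<close> tends to \<open>\<integral> T\<^sup>* \<chi>\<^sub>E = \<mu> E\<close>.

  Sufficiency: \<open>D\<close> is monotone and integral preserving on simple functions. For a nonnegative
  integrable \<open>f\<close> and simple \<open>s\<^sub>k \<up> f\<close>, the supremum of the \<open>D s\<^sub>k\<close> does not depend on the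
  approximation (up to null sets) and has integral \<open>\<integral> f\<close>. This gives an additive, positively
  homogeneous extension to nonnegative functions that commutes with increasing limits, and
  \<open>T f = T f\<^sup>+ - T f\<^sup>-\<close> is a Markov operator. It is the only one extending \<open>D\<close>: any other positive extension
  dominates it and has the same integrals. For bounded \<open>g \<ge> 0\<close> and a strictly positive integrable
  weight \<open>w\<close>, \<open>E \<mapsto> \<integral> g \<cdot> T (w \<chi>\<^sub>E)\<close> is a measure absolutely continuous with respect to \<open>\<mu>\<close>; its
  Radon-Nikodym derivative divided by \<open>w\<close> is \<open>T\<^sup>* g\<close>. Finally the limit condition says that
  \<open>T \<chi>\<^bsub>A n\<^esub> \<up> 1\<close> almost everywhere, whence \<open>\<integral> T\<^sup>* g = \<integral> g\<close>.
\<close>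

lemma simple_L1_add: "f \<in> simple_L1 M \<Longrightarrow> g \<in> simple_L1 M \<Longrightarrow> (\<lambda>x. f x + g x) \<in> simple_L1 M"
  and simple_L1_diff: "f \<in> simple_L1 M \<Longrightarrow> g \<in> simple_L1 M \<Longrightarrow> (\<lambda>x. f x - g x) \<in> simple_L1 M"
  and simple_L1_cmult: "f \<in> simple_L1 M \<Longrightarrow> (\<lambda>x. c * f x) \<in> simple_L1 M"
  and simple_L1_zero: "(\<lambda>x. 0) \<in> simple_L1 M"
  by (auto simp: simple_L1_def)

lemma simple_L1_min: "f \<in> simple_L1 M \<Longrightarrow> g \<in> simple_L1 M \<Longrightarrow> (\<lambda>x. min (f x) (g x)) \<in> simple_L1 M"
  and simple_L1_max: "f \<in> simple_L1 M \<Longrightarrow> g \<in> simple_L1 M \<Longrightarrow> (\<lambda>x. max (f x) (g x)) \<in> simple_L1 M"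
  by (auto simp: simple_L1_def intro: simple_function_compose2)

lemma simple_L1_sum:
  "(\<And>i. i \<in> I \<Longrightarrow> f i \<in> simple_L1 M) \<Longrightarrow> (\<lambda>x. \<Sum>i\<in>I. f i x) \<in> simple_L1 M"
  by (auto simp: simple_L1_def)

lemma simple_L1_indicator: "E \<in> sets M \<Longrightarrow> emeasure M E < \<infinity> \<Longrightarrow> indicator E \<in> simple_L1 M"
  by (auto simp: simple_L1_def integrable_indicator_iff Int_absorb2 sets.sets_into_space)

lemma emeasure_level_set_finite:
  fixes f :: "'a \<Rightarrow> real"
  assumes f: "integrable M f" and y: "y \<noteq> 0"
  shows "emeasure M (f -` {y} \<inter> space M) < \<infinity>"
proof -
  have E: "f -` {y} \<inter> space M \<in> sets M"
    using f by (intro borel_measurable_vimage) auto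
  have "integrable M (indicator (f -` {y} \<inter> space M) :: _ \<Rightarrow> real)"
  proof (rule Bochner_Integration.integrable_bound[where f="\<lambda>x. f x / y"])
    show "AE x in M. norm (indicat_real (f -` {y} \<inter> space M) x) \<le> norm (f x / y)"
      using y by (auto split: split_indicator)
  qed (use f E in auto)
  then show ?thesis
    by (simp add: integrable_indicator_iff Int_absorb2)
qed

lemma simple_function_eq_sum_level_sets:
  fixes f :: "'a \<Rightarrow> real"
  assumes f: "simple_function M f" and x: "x \<in> space M"
  shows "f x = (\<Sum>y\<in>f ` space M - {0}. y * indicator (f -` {y} \<inter> space M) x)"
proof (cases "f x = 0")
  case True
  then have "\<forall>y\<in>f ` space M - {0}. y * indicator (f -` {y} \<inter> space M) x = 0"
    by (auto split: split_indicator)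
  with True show ?thesis
    by simp
next
  case False
  with x have "(\<Sum>y\<in>f ` space M - {0}. y * indicator (f -` {y} \<inter> space M) x)
      = (\<Sum>y\<in>f ` space M - {0}. if y = f x then f x else 0)"
    by (intro sum.cong) (auto split: split_indicator)
  also have "\<dots> = f x"
    using False x f by (simp add: simple_function_def)
  finally show ?thesis ..
qed

definition pos_part :: "('a \<Rightarrow> real) \<Rightarrow> 'a \<Rightarrow> real" where
  "pos_part f = (\<lambda>x. max (f x) 0)"

definition neg_part :: "('a \<Rightarrow> real) \<Rightarrow> 'a \<Rightarrow> real" where
  "neg_part f = (\<lambda>x. max (- f x) 0)"

lemma pos_part_minus_neg_part: "pos_part f x - neg_part f x = f x"
  by (auto simp: pos_part_def neg_part_def)

lemma pos_part_nonneg[simp]: "0 \<le> pos_part f x"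
  and neg_part_nonneg[simp]: "0 \<le> neg_part f x"
  by (auto simp: pos_part_def neg_part_def)

lemma pos_part_uminus: "pos_part (\<lambda>x. - f x) = neg_part f"
  by (simp add: pos_part_def neg_part_def)

lemma ennreal_pos_part: "ennreal (pos_part f x) = ennreal (f x)"
  by (cases "0 \<le> f x") (auto simp: pos_part_def ennreal_neg)

lemma borel_measurable_pos_part[measurable]: "f \<in> borel_measurable M \<Longrightarrow> pos_part f \<in> borel_measurable M"
  and borel_measurable_neg_part[measurable]: "f \<in> borel_measurable M \<Longrightarrow> neg_part f \<in> borel_measurable M"
  by (auto simp: pos_part_def neg_part_def)

lemma integrable_pos_part: "integrable M f \<Longrightarrow> integrable M (pos_part f)"
  and integrable_neg_part: "integrable M f \<Longrightarrow> integrable M (neg_part f)"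
  by (auto simp: pos_part_def neg_part_def)

lemma simple_L1_pos_part: "f \<in> simple_L1 M \<Longrightarrow> pos_part f \<in> simple_L1 M"
  unfolding pos_part_def by (rule simple_L1_max[OF _ simple_L1_zero])

lemma simple_L1_neg_part: "f \<in> simple_L1 M \<Longrightarrow> neg_part f \<in> simple_L1 M"
  unfolding neg_part_def by (rule simple_L1_max[OF simple_L1_cmult[of f M "-1", simplified] simple_L1_zero])

lemma integral_pos_part_minus_neg_part:
  "integrable M f \<Longrightarrow> (\<integral>x. pos_part f x \<partial>M) - (\<integral>x. neg_part f x \<partial>M) = (\<integral>x. f x \<partial>M)"
  by (simp add: Bochner_Integration.integral_diff[symmetric] integrable_pos_part integrable_neg_part
      pos_part_minus_neg_part)

definition nonneg_integrable :: "'a measure \<Rightarrow> ('a \<Rightarrow> real) \<Rightarrow> bool" where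
  "nonneg_integrable M f \<longleftrightarrow> integrable M f \<and> (\<forall>x\<in>space M. 0 \<le> f x)"

lemma nonneg_integrableD:
  "nonneg_integrable M f \<Longrightarrow> integrable M f"
  "nonneg_integrable M f \<Longrightarrow> x \<in> space M \<Longrightarrow> 0 \<le> f x"
  by (auto simp: nonneg_integrable_def)

lemma borel_measurable_nonneg_integrable[measurable_dest]:
  "nonneg_integrable M f \<Longrightarrow> f \<in> borel_measurable M"
  by (auto simp: nonneg_integrable_def)

lemma nonneg_integrable_add:
    "nonneg_integrable M f \<Longrightarrow> nonneg_integrable M g \<Longrightarrow> nonneg_integrable M (\<lambda>x. f x + g x)"
  and nonneg_integrable_cmult: "nonneg_integrable M f \<Longrightarrow> 0 \<le> c \<Longrightarrow> nonneg_integrable M (\<lambda>x. c * f x)"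
  and nonneg_integrable_zero: "nonneg_integrable M (\<lambda>x. 0)"
  by (auto simp: nonneg_integrable_def)

lemma nonneg_integrable_pos_part: "integrable M f \<Longrightarrow> nonneg_integrable M (pos_part f)"
  and nonneg_integrable_neg_part: "integrable M f \<Longrightarrow> nonneg_integrable M (neg_part f)"
  by (auto simp: nonneg_integrable_def integrable_pos_part integrable_neg_part)

lemma nonneg_integrable_indicator:
  "E \<in> sets M \<Longrightarrow> emeasure M E < \<infinity> \<Longrightarrow> nonneg_integrable M (indicator E)"
  using simple_L1_indicator by (auto simp: nonneg_integrable_def simple_L1_def)

lemma nonneg_integrable_simple_L1:
  "f \<in> simple_L1 M \<Longrightarrow> (\<And>x. x \<in> space M \<Longrightarrow> 0 \<le> f x) \<Longrightarrow> nonneg_integrable M f"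
  by (auto simp: nonneg_integrable_def simple_L1_def)

lemma SUP_ennreal_integral_incseq:
  fixes f :: "nat \<Rightarrow> 'a \<Rightarrow> real"
  assumes f: "\<And>k. integrable M (f k)" and g: "integrable M g"
    and nonneg: "\<And>k x. x \<in> space M \<Longrightarrow> 0 \<le> f k x"
    and mono: "\<And>k x. x \<in> space M \<Longrightarrow> f k x \<le> f (Suc k) x"
    and lim: "\<And>x. x \<in> space M \<Longrightarrow> (\<lambda>k. f k x) \<longlonglongrightarrow> g x"
  shows "(SUP k. ennreal (\<integral>x. f k x \<partial>M)) = ennreal (\<integral>x. g x \<partial>M)"
proof -
  have inc: "incseq (\<lambda>k. ennreal (\<integral>x. f k x \<partial>M))"
    using f mono by (intro incseq_SucI ennreal_leI integral_mono) auto
  have le: "f k x \<le> g x" if "x \<in> space M" for k x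
    using incseq_le[OF incseq_SucI[of "\<lambda>k. f k x", OF mono[OF that]] lim[OF that]] by simp
  have "(\<lambda>k. \<integral>x. f k x \<partial>M) \<longlonglongrightarrow> (\<integral>x. g x \<partial>M)"
  proof (rule integral_dominated_convergence[where w=g])
    show "AE x in M. norm (f k x) \<le> g x" for k
      using nonneg le by auto
  qed (use f g lim in auto)
  then have "(\<lambda>k. ennreal (\<integral>x. f k x \<partial>M)) \<longlonglongrightarrow> ennreal (\<integral>x. g x \<partial>M)"
    by (rule tendsto_ennrealI)
  from LIMSEQ_unique[OF LIMSEQ_SUP[OF inc] this] show ?thesis .
qed

lemma AE_eq_if_le_nn_integral_eq:
  fixes h k :: "'a \<Rightarrow> ennreal"
  assumes [measurable]: "h \<in> borel_measurable M" "k \<in> borel_measurable M"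
    and le: "AE x in M. h x \<le> k x" and eq: "(\<integral>\<^sup>+x. h x \<partial>M) = (\<integral>\<^sup>+x. k x \<partial>M)"
    and fin: "(\<integral>\<^sup>+x. k x \<partial>M) \<noteq> \<infinity>"
  shows "AE x in M. h x = k x"
proof -
  have "(\<integral>\<^sup>+x. k x - h x \<partial>M) = (\<integral>\<^sup>+x. k x \<partial>M) - (\<integral>\<^sup>+x. h x \<partial>M)"
    by (rule nn_integral_diff) (use le eq fin in auto)
  also have "\<dots> = 0"
    using eq fin by simp
  finally have "AE x in M. k x - h x = 0"
    by (subst (asm) nn_integral_0_iff_AE) auto
  with le show ?thesis
    by eventually_elim (auto simp: ennreal_minus_eq_0 intro: antisym)
qed

lemma AE_not_in_if_nn_set_integral_le:
  fixes h k :: "'a \<Rightarrow> ennreal"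
  assumes [measurable]: "h \<in> borel_measurable M" "k \<in> borel_measurable M" "B \<in> sets M"
    and less: "\<And>x. x \<in> B \<Longrightarrow> k x < h x" and k_fin: "(\<integral>\<^sup>+x. k x * indicator B x \<partial>M) \<noteq> \<infinity>"
    and le: "(\<integral>\<^sup>+x. h x * indicator B x \<partial>M) \<le> (\<integral>\<^sup>+x. k x * indicator B x \<partial>M)"
  shows "AE x in M. x \<notin> B"
proof -
  have "AE x in M. h x * indicator B x \<le> k x * indicator B x"
  proof (rule ccontr)
    assume "\<not> ?thesis"
    moreover have "AE x in M. k x * indicator B x \<le> h x * indicator B x"
      using less by (intro AE_I2) (auto split: split_indicator intro: less_imp_le)
    ultimately have "(\<integral>\<^sup>+x. k x * indicator B x \<partial>M) < (\<integral>\<^sup>+x. h x * indicator B x \<partial>M)"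
      by (intro nn_integral_less k_fin) auto
    with le show False
      by simp
  qed
  then show ?thesis
  proof eventually_elim
    case (elim x)
    show ?case
    proof
      assume "x \<in> B"
      with elim less[of x] show False
        by simp
    qed
  qed
qed

lemma (in sigma_finite_measure) AE_le_if_nn_set_integral_le:
  fixes h k :: "'a \<Rightarrow> ennreal"
  assumes h[measurable]: "h \<in> borel_measurable M" and k[measurable]: "k \<in> borel_measurable M"
    and fin: "AE x in M. k x < \<infinity>"
    and le: "\<And>E. E \<in> sets M \<Longrightarrow> emeasure M E < \<infinity> \<Longrightarrow>
       (\<integral>\<^sup>+x. h x * indicator E x \<partial>M) \<le> (\<integral>\<^sup>+x. k x * indicator E x \<partial>M)"
  shows "AE x in M. h x \<le> k x"
proof -
  obtain A :: "nat \<Rightarrow> 'a set" where A: "range A \<subseteq> sets M" "(\<Union>i. A i) = space M"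
    "\<And>i. emeasure M (A i) \<noteq> \<infinity>"
    using sigma_finite by blast
  have A_sets[measurable]: "A n \<in> sets M" for n
    using A(1) by auto
  define B where "B n m = {x\<in>space M. k x < h x} \<inter> A n \<inter> {x\<in>space M. k x \<le> of_nat m}" for n m :: nat
  have B_sets[measurable]: "B n m \<in> sets M" for n m
    unfolding B_def by measurable
  have B_finite: "emeasure M (B n m) < \<infinity>" for n m
  proof -
    have "emeasure M (B n m) \<le> emeasure M (A n)"
      by (rule emeasure_mono) (auto simp: B_def)
    with A(3)[of n] show ?thesis
      by (simp add: less_top neq_top_trans)
  qed
  have "AE x in M. x \<notin> B n m" for n m
  proof (rule AE_not_in_if_nn_set_integral_le[OF h k B_sets])
    show "k x < h x" if "x \<in> B n m" for x
      using that by (simp add: B_def)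
    show "(\<integral>\<^sup>+x. h x * indicator (B n m) x \<partial>M) \<le> (\<integral>\<^sup>+x. k x * indicator (B n m) x \<partial>M)"
      by (rule le[OF B_sets B_finite])
    have "(\<integral>\<^sup>+x. k x * indicator (B n m) x \<partial>M) \<le> (\<integral>\<^sup>+x. of_nat m * indicator (B n m) x \<partial>M)"
      by (intro nn_integral_mono) (auto simp: B_def split: split_indicator)
    also have "\<dots> < \<infinity>"
      using B_finite[of n m] by (simp add: nn_integral_cmult_indicator ennreal_mult_less_top of_nat_less_top)
    finally show "(\<integral>\<^sup>+x. k x * indicator (B n m) x \<partial>M) \<noteq> \<infinity>"
      by simp
  qed
  then have "AE x in M. \<forall>n m. x \<notin> B n m"
    by (simp add: AE_all_countable)
  with fin AE_space show ?thesis
  proof eventually_elim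
    case (elim x)
    show ?case
    proof (rule ccontr)
      assume "\<not> h x \<le> k x"
      moreover obtain n where "x \<in> A n"
        using A(2) elim by blast
      moreover obtain m where "k x \<le> of_nat m"
        using ennreal_Ex_less_of_nat[of "k x"] elim(1) by (auto dest: less_imp_le)
      ultimately have "x \<in> B n m"
        using elim by (simp add: B_def)
      with elim show False
        by blast
    qed
  qed
qed

lemma integrable_bounded_mult:
  fixes g f :: "'a \<Rightarrow> real"
  assumes [measurable]: "g \<in> borel_measurable M" and g_bound: "AE x in M. \<bar>g x\<bar> \<le> C"
    and f: "integrable M f"
  shows "integrable M (\<lambda>x. g x * f x)"
proof (rule Bochner_Integration.integrable_bound[where f="\<lambda>x. C * f x"])
  show "AE x in M. norm (g x * f x) \<le> norm (C * f x)"
    using g_bound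
  proof eventually_elim
    case (elim x)
    then have "0 \<le> C"
      by linarith
    with elim show ?case
      by (simp add: abs_mult mult_right_mono)
  qed
qed (use f in auto)

lemma integrable_nonneg_mult_le:
  fixes w u v :: "'a \<Rightarrow> real"
  assumes wv: "integrable M (\<lambda>x. w x * v x)" and w: "w \<in> borel_measurable M" "\<And>x. 0 \<le> w x"
    and u: "u \<in> borel_measurable M" "\<And>x. 0 \<le> u x" and le: "\<And>x. x \<in> space M \<Longrightarrow> u x \<le> v x"
  shows "integrable M (\<lambda>x. w x * u x)"
proof (rule Bochner_Integration.integrable_bound[OF wv])
  show "AE x in M. norm (w x * u x) \<le> norm (w x * v x)"
    using w(2) u(2) le
    by (intro AE_I2) (auto simp: abs_mult intro!: mult_left_mono order_trans[OF _ abs_ge_self])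
qed (use w u in measurable)

lemma borel_measurable_induct_weighted[consumes 5, case_names set mult add seq]:
  fixes w u :: "'a \<Rightarrow> real" and P :: "('a \<Rightarrow> real) \<Rightarrow> bool"
  assumes w: "w \<in> borel_measurable M" "\<And>x. 0 \<le> w x"
    and u: "u \<in> borel_measurable M" "\<And>x. 0 \<le> u x" "integrable M (\<lambda>x. w x * u x)"
    and P_indicator: "\<And>E. E \<in> sets M \<Longrightarrow> P (indicator E)"
    and P_cmult: "\<And>u c. 0 < c \<Longrightarrow> u \<in> borel_measurable M \<Longrightarrow> (\<And>x. 0 \<le> u x) \<Longrightarrow>
      integrable M (\<lambda>x. w x * u x) \<Longrightarrow> P u \<Longrightarrow> P (\<lambda>x. c * u x)"
    and P_add: "\<And>u v. u \<in> borel_measurable M \<Longrightarrow> (\<And>x. 0 \<le> u x) \<Longrightarrow> integrable M (\<lambda>x. w x * u x) \<Longrightarrow>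
      P u \<Longrightarrow> v \<in> borel_measurable M \<Longrightarrow> (\<And>x. 0 \<le> v x) \<Longrightarrow> integrable M (\<lambda>x. w x * v x) \<Longrightarrow>
      P v \<Longrightarrow> P (\<lambda>x. v x + u x)"
    and P_SUP: "\<And>U. (\<And>i. U i \<in> borel_measurable M) \<Longrightarrow> (\<And>i x. 0 \<le> U i x) \<Longrightarrow>
      (\<And>i. integrable M (\<lambda>x. w x * U i x)) \<Longrightarrow> (\<And>i. P (U i)) \<Longrightarrow> incseq U \<Longrightarrow>
      (\<And>x. x \<in> space M \<Longrightarrow> (\<lambda>i. U i x) \<longlonglongrightarrow> u x) \<Longrightarrow> P u"
  shows "P u"
proof -
  have "integrable M (\<lambda>x. w x * u x) \<longrightarrow> P u"
    using u(1,2)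
  proof (induction u rule: borel_measurable_induct_real)
    case (set E)
    then show ?case
      by (simp add: P_indicator)
  next
    case (mult u c)
    show ?case
    proof
      assume w_cu: "integrable M (\<lambda>x. w x * (c * u x))"
      show "P (\<lambda>x. c * u x)"
      proof (cases "c = 0")
        case True
        then have "(\<lambda>x. c * u x) = indicator {}"
          by (simp add: fun_eq_iff)
        then show ?thesis
          by (simp add: P_indicator)
      next
        case False
        then have "integrable M (\<lambda>x. w x * u x)"
          using integrable_mult_right[OF w_cu, of "1 / c"] by (simp add: field_simps)
        with mult False show ?thesis
          by (intro P_cmult) auto
      qed
    qed
  next
    case (add u v)
    show ?case
    proof
      assume w_vu: "integrable M (\<lambda>x. w x * (v x + u x))"
      have "integrable M (\<lambda>x. w x * u x)" "integrable M (\<lambda>x. w x * v x)"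
        using add.hyps by (auto intro!: integrable_nonneg_mult_le[OF w_vu w])
      with add show "P (\<lambda>x. v x + u x)"
        by (intro P_add) auto
    qed
  next
    case (seq U)
    show ?case
    proof
      assume w_u: "integrable M (\<lambda>x. w x * u x)"
      have "U i x \<le> u x" if "x \<in> space M" for i x
        using incseq_le[of "\<lambda>i. U i x", OF _ seq.hyps(4)[OF that]] seq.hyps(3)
        by (auto simp: incseq_def le_fun_def)
      then have "integrable M (\<lambda>x. w x * U i x)" for i
        using seq.hyps u(2) by (intro integrable_nonneg_mult_le[OF w_u w]) auto
      with seq show "P u"
        by (intro P_SUP) auto
    qed
  qed
  with u(3) show ?thesis
    by blast
qed

lemma linf_bounds:
  assumes "linf M g"
  obtains C where "0 \<le> C" "AE x in M. g x \<le> C" "AE x in M. - g x \<le> C"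
proof -
  obtain C where g_bound: "AE x in M. \<bar>g x\<bar> \<le> C"
    using assms by (auto simp: linf_def)
  from g_bound have "AE x in M. g x \<le> max C 0"
    by eventually_elim simp
  moreover from g_bound have "AE x in M. - g x \<le> max C 0"
    by eventually_elim simp
  ultimately show thesis
    by (rule that[rotated]) simp
qed

lemma linf_indicator: "E \<in> sets M \<Longrightarrow> linf M (indicator E)"
  by (auto simp: linf_def intro!: exI[of _ 1] split: split_indicator)

lemma doubly_stochastic_markov_operator: "doubly_stochastic M T \<Longrightarrow> markov_operator M T"
  by (simp add: doubly_stochastic_def semi_doubly_stochastic_def)

lemma markov_operator_mono:
  assumes T: "markov_operator M T" and f: "integrable M f" and g: "integrable M g"
    and le: "AE x in M. f x \<le> g x"
  shows "AE x in M. T f x \<le> T g x"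
proof -
  have d: "integrable M (\<lambda>x. g x - f x)"
    using f g by simp
  have "AE x in M. 0 \<le> T (\<lambda>x. g x - f x) x"
    using T d le unfolding markov_operator_def by (auto elim!: eventually_mono)
  moreover have "AE x in M. T (\<lambda>y. f y + (g y - f y)) x = T f x + T (\<lambda>x. g x - f x) x"
    using T f d unfolding markov_operator_def l1_operator_def by blast
  ultimately show ?thesis
    by eventually_elim simp
qed

lemma markov_operator_integral_indicator:
  assumes "markov_operator M T" "E \<in> sets M" "emeasure M E < \<infinity>"
  shows "(\<integral>x. T (indicator E) x \<partial>M) = measure M E"
  using assms by (auto simp: markov_operator_def integrable_indicator_iff Int_absorb2 sets.sets_into_space)

lemma doubly_stochastic_indicator_lim:
  assumes T: "doubly_stochastic M T"
    and A: "\<And>n. A n \<in> sets M" "\<And>n. emeasure M (A n) < \<infinity>" "incseq A" "(\<Union>n. A n) = space M"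
    and E: "E \<in> sets M" "emeasure M E < \<infinity>"
  shows "(\<lambda>n. \<integral>x. indicator E x * T (indicator (A n)) x \<partial>M) \<longlonglongrightarrow> measure M E"
proof -
  obtain S where adj: "l1_adjoint M T S" and S_int: "\<And>g. linf M g \<Longrightarrow> integrable M g \<Longrightarrow>
      integrable M (S g) \<and> (\<integral>x. S g x \<partial>M) = (\<integral>x. g x \<partial>M)"
    using T unfolding doubly_stochastic_def by blast
  have E_int: "integrable M (indicator E :: 'a \<Rightarrow> real)"
    using E by (simp add: integrable_indicator_iff Int_absorb2 sets.sets_into_space)
  have SE: "integrable M (S (indicator E))" "(\<integral>x. S (indicator E) x \<partial>M) = measure M E"
    using S_int[OF linf_indicator[OF E(1)] E_int] E(1) by (auto simp: Int_absorb2 sets.sets_into_space)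
  have eq: "(\<integral>x. indicator E x * T (indicator (A n)) x \<partial>M)
      = (\<integral>x. S (indicator E) x * indicator (A n) x \<partial>M)" for n
    using adj linf_indicator[OF E(1)] A(1,2)
    by (auto simp: l1_adjoint_def integrable_indicator_iff Int_absorb2 sets.sets_into_space)
  have "(\<lambda>n. \<integral>x. S (indicator E) x * indicator (A n) x \<partial>M) \<longlonglongrightarrow> (\<integral>x. S (indicator E) x \<partial>M)"
  proof (rule integral_dominated_convergence[where w="\<lambda>x. \<bar>S (indicator E) x\<bar>"])
    show "AE x in M. (\<lambda>n. S (indicator E) x * indicator (A n) x) \<longlonglongrightarrow> S (indicator E) x"
    proof (rule AE_I2)
      fix x assume "x \<in> space M"
      then have "(\<lambda>n. indicator (A n) x :: real) \<longlonglongrightarrow> 1"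
        using LIMSEQ_indicator_incseq[OF A(3), of x] A(4) by simp
      from tendsto_mult_left[OF this] show "(\<lambda>n. S (indicator E) x * indicator (A n) x) \<longlonglongrightarrow> S (indicator E) x"
        by simp
    qed
  qed (use SE A(1) in \<open>auto split: split_indicator\<close>)
  then show ?thesis
    unfolding eq SE(2) .
qed

definition simple_approx :: "'a measure \<Rightarrow> ('a \<Rightarrow> real) \<Rightarrow> (nat \<Rightarrow> 'a \<Rightarrow> real) set" where
  "simple_approx M f = {s. (\<forall>k. s k \<in> simple_L1 M) \<and>
     (\<forall>k. \<forall>x\<in>space M. 0 \<le> s k x \<and> s k x \<le> s (Suc k) x) \<and> (\<forall>x\<in>space M. (\<lambda>k. s k x) \<longlonglongrightarrow> f x)}"

lemma simple_approxD:
  assumes "s \<in> simple_approx M f"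
  shows "s k \<in> simple_L1 M" "x \<in> space M \<Longrightarrow> 0 \<le> s k x" "x \<in> space M \<Longrightarrow> s k x \<le> s (Suc k) x"
    "x \<in> space M \<Longrightarrow> (\<lambda>k. s k x) \<longlonglongrightarrow> f x"
  using assms by (auto simp: simple_approx_def)

lemma simple_approx_le:
  assumes s: "s \<in> simple_approx M f" and x: "x \<in> space M"
  shows "s k x \<le> f x"
  using incseq_le[OF incseq_SucI simple_approxD(4)[OF s x]] simple_approxD(3)[OF s x] by blast

lemma simple_approx_add:
  "s \<in> simple_approx M f \<Longrightarrow> t \<in> simple_approx M g \<Longrightarrow>
    (\<lambda>k x. s k x + t k x) \<in> simple_approx M (\<lambda>x. f x + g x)"
  by (auto simp: simple_approx_def intro!: simple_L1_add tendsto_add add_mono)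

lemma simple_approx_cmult:
  "s \<in> simple_approx M f \<Longrightarrow> 0 \<le> c \<Longrightarrow> (\<lambda>k x. c * s k x) \<in> simple_approx M (\<lambda>x. c * f x)"
  by (auto simp: simple_approx_def intro!: simple_L1_cmult tendsto_mult mult_left_mono)

lemma simple_approx_const:
  "f \<in> simple_L1 M \<Longrightarrow> (\<And>x. x \<in> space M \<Longrightarrow> 0 \<le> f x) \<Longrightarrow> (\<lambda>k. f) \<in> simple_approx M f"
  by (auto simp: simple_approx_def)

lemma simple_approx_nonempty:
  assumes f: "nonneg_integrable M f"
  shows "\<exists>s. s \<in> simple_approx M f"
proof -
  have f_meas[measurable]: "f \<in> borel_measurable M"
    using f by measurable
  obtain s where s: "incseq s" "\<And>i. simple_function M (s i)" "\<And>x. bdd_above (range (\<lambda>i. s i x))"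
    "\<And>i x. 0 \<le> s i x" "pos_part f = (SUP i. s i)"
    using borel_measurable_implies_simple_function_sequence_real[of "pos_part f" M] by auto
  have inc: "incseq (\<lambda>i. s i x)" for x
    using s(1) by (auto simp: incseq_def le_fun_def)
  have lim: "(\<lambda>i. s i x) \<longlonglongrightarrow> pos_part f x" for x
    using LIMSEQ_incseq_SUP[OF s(3) inc] s(5) by (simp add: image_image)
  have f_eq: "pos_part f x = f x" if "x \<in> space M" for x
    using nonneg_integrableD(2)[OF f that] by (simp add: pos_part_def)
  have lim_f: "(\<lambda>i. s i x) \<longlonglongrightarrow> f x" if "x \<in> space M" for x
    using lim[of x] f_eq[OF that] by simp
  have "integrable M (s i)" for i
  proof (rule Bochner_Integration.integrable_bound[where f=f])
    show "AE x in M. norm (s i x) \<le> norm (f x)"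
    proof (rule AE_I2)
      fix x assume "x \<in> space M"
      then have "s i x \<le> f x"
        using incseq_le[OF inc lim, of i x] f_eq by simp
      with s(4)[of i x] show "norm (s i x) \<le> norm (f x)"
        by simp
    qed
  qed (use f s(2) in \<open>auto simp: nonneg_integrable_def borel_measurable_simple_function\<close>)
  then have "s \<in> simple_approx M f"
    using s(2,4) inc lim_f by (auto simp: simple_approx_def simple_L1_def incseq_Suc_iff)
  then show ?thesis
    by blast
qed

lemma SUP_integral_simple_approx:
  assumes f: "nonneg_integrable M f" and s: "s \<in> simple_approx M f"
  shows "(SUP k. ennreal (\<integral>x. s k x \<partial>M)) = ennreal (\<integral>x. f x \<partial>M)"
  using simple_approxD[OF s] f
  by (intro SUP_ennreal_integral_incseq) (auto simp: simple_L1_def nonneg_integrable_def)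

lemma integral_diff_min_simple_approx:
  assumes s: "s \<in> simple_L1 M" "\<And>x. x \<in> space M \<Longrightarrow> 0 \<le> s x"
    and t: "t \<in> simple_approx M g" and le: "AE x in M. s x \<le> g x"
  shows "(\<lambda>j. \<integral>x. s x - min (s x) (t j x) \<partial>M) \<longlonglongrightarrow> 0"
proof -
  have diff_L1: "(\<lambda>x. s x - min (s x) (t j x)) \<in> simple_L1 M" for j
    using simple_L1_diff[OF s(1) simple_L1_min[OF s(1) simple_approxD(1)[OF t]]] .
  have "(\<lambda>j. \<integral>x. s x - min (s x) (t j x) \<partial>M) \<longlonglongrightarrow> (\<integral>x. 0 \<partial>M)"
  proof (rule integral_dominated_convergence[where w=s])
    show "AE x in M. norm (s x - min (s x) (t j x)) \<le> s x" for j
      using s(2) simple_approxD(2)[OF t] by auto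
    show "AE x in M. (\<lambda>j. s x - min (s x) (t j x)) \<longlonglongrightarrow> 0"
      using le AE_space
    proof eventually_elim
      case (elim x)
      have "(\<lambda>j. s x - min (s x) (t j x)) \<longlonglongrightarrow> s x - min (s x) (g x)"
        by (intro tendsto_intros simple_approxD(4)[OF t elim(2)])
      with elim(1) show ?case
        by simp
    qed
  qed (use s diff_L1 in \<open>auto simp: simple_L1_def\<close>)
  then show ?thesis
    by simp
qed

locale linear_on_simple_L1 =
  fixes M :: "'a measure" and D :: "('a \<Rightarrow> real) \<Rightarrow> 'a \<Rightarrow> real"
  assumes D_integrable: "\<And>f. f \<in> simple_L1 M \<Longrightarrow> integrable M (D f)"
    and D_cong: "\<And>f g. f \<in> simple_L1 M \<Longrightarrow> g \<in> simple_L1 M \<Longrightarrow>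
        (AE x in M. f x = g x) \<Longrightarrow> (AE x in M. D f x = D g x)"
    and D_add: "\<And>f g. f \<in> simple_L1 M \<Longrightarrow> g \<in> simple_L1 M \<Longrightarrow>
        (AE x in M. D (\<lambda>y. f y + g y) x = D f x + D g x)"
    and D_cmult: "\<And>f c. f \<in> simple_L1 M \<Longrightarrow> (AE x in M. D (\<lambda>y. c * f y) x = c * D f x)"
begin

lemma D_measurable[measurable]: "f \<in> simple_L1 M \<Longrightarrow> D f \<in> borel_measurable M"
  using D_integrable by auto

lemma D_diff:
  assumes f: "f \<in> simple_L1 M" and g: "g \<in> simple_L1 M"
  shows "AE x in M. D (\<lambda>y. f y - g y) x = D f x - D g x"
proof -
  have diff_eq: "(\<lambda>y. f y - g y) = (\<lambda>y. f y + (-1) * g y)"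
    by auto
  from D_add[OF f simple_L1_cmult[OF g, of "-1"]] D_cmult[OF g, of "-1"] show ?thesis
    unfolding diff_eq by eventually_elim simp
qed

lemma D_zero: "AE x in M. D (\<lambda>y. 0) x = 0"
  using D_cmult[OF simple_L1_zero, of 0] by simp

lemma D_sum:
  assumes "finite I" "\<And>i. i \<in> I \<Longrightarrow> f i \<in> simple_L1 M"
  shows "AE x in M. D (\<lambda>x. \<Sum>i\<in>I. f i x) x = (\<Sum>i\<in>I. D (f i) x)"
  using assms
proof (induction I rule: finite_induct)
  case empty
  then show ?case
    using D_zero by simp
next
  case (insert i I)
  then have "AE x in M. D (\<lambda>x. f i x + (\<Sum>i\<in>I. f i x)) x = D (f i) x + D (\<lambda>x. \<Sum>i\<in>I. f i x) x"
    by (intro D_add simple_L1_sum) auto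
  moreover have "AE x in M. D (\<lambda>x. \<Sum>i\<in>I. f i x) x = (\<Sum>i\<in>I. D (f i) x)"
    using insert by simp
  ultimately show ?case
    by eventually_elim (simp add: insert.hyps)
qed

end

locale markov_on_simple_L1 = linear_on_simple_L1 +
  assumes D_nonneg: "\<And>f. f \<in> simple_L1 M \<Longrightarrow> (AE x in M. 0 \<le> f x) \<Longrightarrow> (AE x in M. 0 \<le> D f x)"
    and D_integral_indicator: "\<And>E. E \<in> sets M \<Longrightarrow> emeasure M E < \<infinity> \<Longrightarrow>
        (\<integral>x. D (indicator E) x \<partial>M) = measure M E"
begin

lemma D_mono:
  assumes f: "f \<in> simple_L1 M" and g: "g \<in> simple_L1 M" and le: "AE x in M. f x \<le> g x"
  shows "AE x in M. D f x \<le> D g x"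
proof -
  have "AE x in M. 0 \<le> D (\<lambda>y. g y - f y) x"
    using le by (intro D_nonneg simple_L1_diff g f) auto
  with D_diff[OF g f] show ?thesis
    by eventually_elim auto
qed

lemma D_integral:
  assumes f: "f \<in> simple_L1 M"
  shows "(\<integral>x. D f x \<partial>M) = (\<integral>x. f x \<partial>M)"
proof -
  define V where "V = f ` space M - {0}"
  define E where "E y = f -` {y} \<inter> space M" for y
  have f_sf: "simple_function M f" and f_int: "integrable M f"
    using f by (auto simp: simple_L1_def)
  have V: "finite V"
    using f_sf by (auto simp: simple_function_def V_def)
  have E: "E y \<in> sets M" "emeasure M (E y) < \<infinity>" if "y \<in> V" for y
    using that f_sf emeasure_level_set_finite[OF f_int] by (auto simp: V_def E_def)
  have E_L1: "indicator (E y) \<in> simple_L1 M" if "y \<in> V" for y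
    using E[OF that] by (rule simple_L1_indicator)
  have f_eq: "f x = (\<Sum>y\<in>V. y * indicator (E y) x)" if "x \<in> space M" for x
    unfolding V_def E_def using simple_function_eq_sum_level_sets[OF f_sf that] .
  have "AE x in M. D f x = D (\<lambda>x. \<Sum>y\<in>V. y * indicator (E y) x) x"
    using f_eq by (intro D_cong f simple_L1_sum simple_L1_cmult E_L1) auto
  moreover have "AE x in M. D (\<lambda>x. \<Sum>y\<in>V. y * indicator (E y) x) x = (\<Sum>y\<in>V. D (\<lambda>x. y * indicator (E y) x) x)"
    using V E_L1 by (intro D_sum simple_L1_cmult)
  moreover have "AE x in M. \<forall>y\<in>V. D (\<lambda>x. y * indicator (E y) x) x = y * D (indicator (E y)) x"
    using V E_L1 D_cmult by (subst AE_finite_all) auto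
  ultimately have "AE x in M. D f x = (\<Sum>y\<in>V. y * D (indicator (E y)) x)"
    by eventually_elim simp
  then have "(\<integral>x. D f x \<partial>M) = (\<integral>x. (\<Sum>y\<in>V. y * D (indicator (E y)) x) \<partial>M)"
    using f E_L1
    by (intro integral_cong_AE) (auto intro!: D_measurable borel_measurable_sum borel_measurable_times)
  also have "\<dots> = (\<Sum>y\<in>V. y * measure M (E y))"
    using E_L1 E D_integrable by (simp add: Bochner_Integration.integral_sum D_integral_indicator)
  also have "\<dots> = (\<integral>x. (\<Sum>y\<in>V. y * indicator (E y) x) \<partial>M)"
    using E by (simp add: Bochner_Integration.integral_sum integrable_indicator_iff Int_absorb2
        sets.sets_into_space)
  also have "\<dots> = (\<integral>x. f x \<partial>M)"
    using f_eq by (intro Bochner_Integration.integral_cong) auto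
  finally show ?thesis .
qed

section \<open>Extension to nonnegative integrable functions\<close>

definition D_SUP :: "(nat \<Rightarrow> 'a \<Rightarrow> real) \<Rightarrow> 'a \<Rightarrow> ennreal" where
  "D_SUP s x = (SUP k. ennreal (D (s k) x))"

lemma borel_measurable_D_SUP[measurable]: "s \<in> simple_approx M f \<Longrightarrow> D_SUP s \<in> borel_measurable M"
  unfolding D_SUP_def[abs_def] using simple_approxD(1) by measurable

lemma D_simple_approx_nonneg: "s \<in> simple_approx M f \<Longrightarrow> AE x in M. \<forall>k. 0 \<le> D (s k) x"
  unfolding AE_all_countable by (auto intro!: D_nonneg dest: simple_approxD)

lemma D_simple_approx_mono: "s \<in> simple_approx M f \<Longrightarrow> AE x in M. \<forall>k. D (s k) x \<le> D (s (Suc k)) x"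
  unfolding AE_all_countable by (auto intro!: D_mono dest: simple_approxD)

text \<open>With \<open>r\<^sub>j = s - min s t\<^sub>j\<close> we have \<open>D s \<le> D t\<^sub>j + D r\<^sub>j\<close>, and \<open>\<integral> D r\<^sub>j = \<integral> r\<^sub>j \<longrightarrow> 0\<close>.\<close>
lemma D_le_D_SUP:
  assumes s: "s \<in> simple_L1 M" "\<And>x. x \<in> space M \<Longrightarrow> 0 \<le> s x"
    and t: "t \<in> simple_approx M g" and le: "AE x in M. s x \<le> g x"
  shows "AE x in M. ennreal (D s x) \<le> D_SUP t x"
proof -
  define r where "r j = (\<lambda>x. s x - min (s x) (t j x))" for j
  have min_L1: "(\<lambda>x. min (s x) (t j x)) \<in> simple_L1 M" for j
    using simple_L1_min[OF s(1) simple_approxD(1)[OF t]] .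
  have r_L1: "r j \<in> simple_L1 M" for j
    unfolding r_def using simple_L1_diff[OF s(1) min_L1] .
  have D_r: "AE x in M. 0 \<le> D (r j) x" for j
    using r_L1 by (rule D_nonneg) (auto simp: r_def)
  have bound: "AE x in M. ennreal (D s x) - D_SUP t x \<le> ennreal (D (r j) x)" for j
  proof -
    have "AE x in M. D (r j) x = D s x - D (\<lambda>x. min (s x) (t j x)) x"
      unfolding r_def using D_diff[OF s(1) min_L1] .
    moreover have "AE x in M. D (\<lambda>x. min (s x) (t j x)) x \<le> D (t j) x"
      by (rule D_mono[OF min_L1 simple_approxD(1)[OF t]]) auto
    ultimately show ?thesis
      using D_r[of j] D_simple_approx_nonneg[OF t]
    proof eventually_elim
      case (elim x)
      have "ennreal (D (t j) x) \<le> D_SUP t x"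
        unfolding D_SUP_def by (rule SUP_upper) auto
      moreover have "ennreal (D s x) \<le> ennreal (D (t j) x) + ennreal (D (r j) x)"
        using elim by (simp add: ennreal_plus[symmetric] del: ennreal_plus)
      ultimately have "ennreal (D s x) \<le> D_SUP t x + ennreal (D (r j) x)"
        by (meson add_right_mono order_trans)
      then show ?case
        by (simp add: ennreal_minus_le_iff)
    qed
  qed
  have "(\<lambda>j. \<integral>x. r j x \<partial>M) \<longlonglongrightarrow> 0"
    unfolding r_def using s t le by (rule integral_diff_min_simple_approx)
  then have r_lim: "(\<lambda>j. ennreal (\<integral>x. r j x \<partial>M)) \<longlonglongrightarrow> ennreal 0"
    using tendsto_ennrealI by fastforce
  have "(\<integral>\<^sup>+x. ennreal (D s x) - D_SUP t x \<partial>M) \<le> ennreal (\<integral>x. r j x \<partial>M)" for j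
  proof -
    have "(\<integral>\<^sup>+x. ennreal (D s x) - D_SUP t x \<partial>M) \<le> (\<integral>\<^sup>+x. ennreal (D (r j) x) \<partial>M)"
      by (rule nn_integral_mono_AE[OF bound])
    also have "\<dots> = ennreal (\<integral>x. D (r j) x \<partial>M)"
      by (rule nn_integral_eq_integral[OF D_integrable[OF r_L1] D_r])
    finally show ?thesis
      using D_integral[OF r_L1] by simp
  qed
  then have "(\<integral>\<^sup>+x. ennreal (D s x) - D_SUP t x \<partial>M) = 0"
    using LIMSEQ_le_const[OF r_lim] by (simp add: le_zero_eq)
  then have "AE x in M. ennreal (D s x) - D_SUP t x = 0"
    using s t by (subst (asm) nn_integral_0_iff_AE) auto
  then show ?thesis
    by eventually_elim (simp add: ennreal_minus_eq_0)
qed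

lemma D_SUP_mono:
  assumes s: "s \<in> simple_approx M f" and t: "t \<in> simple_approx M g" and le: "AE x in M. f x \<le> g x"
  shows "AE x in M. D_SUP s x \<le> D_SUP t x"
proof -
  have "AE x in M. ennreal (D (s k) x) \<le> D_SUP t x" for k
    using le simple_approx_le[OF s]
    by (intro D_le_D_SUP[OF simple_approxD(1,2)[OF s] t]) (auto elim: eventually_mono intro: order_trans)
  then have "AE x in M. \<forall>k. ennreal (D (s k) x) \<le> D_SUP t x"
    by (simp add: AE_all_countable)
  then show ?thesis
    by eventually_elim (simp add: D_SUP_def SUP_le_iff)
qed

lemma nn_integral_D_SUP:
  assumes f: "nonneg_integrable M f" and s: "s \<in> simple_approx M f"
  shows "(\<integral>\<^sup>+x. D_SUP s x \<partial>M) = ennreal (\<integral>x. f x \<partial>M)"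
proof -
  have s_L1: "s k \<in> simple_L1 M" for k
    using simple_approxD(1)[OF s] .
  have "(\<integral>\<^sup>+x. D_SUP s x \<partial>M) = (SUP k. \<integral>\<^sup>+x. ennreal (D (s k) x) \<partial>M)"
    unfolding D_SUP_def
  proof (rule nn_integral_monotone_convergence_SUP_AE)
    show "AE x in M. ennreal (D (s k) x) \<le> ennreal (D (s (Suc k)) x)" for k
      using D_simple_approx_mono[OF s] by eventually_elim (simp add: ennreal_leI)
  qed (use s_L1 in measurable)
  also have "\<dots> = (SUP k. ennreal (\<integral>x. s k x \<partial>M))"
  proof (rule SUP_cong[OF refl])
    fix k
    have "(\<integral>\<^sup>+x. ennreal (D (s k) x) \<partial>M) = ennreal (\<integral>x. D (s k) x \<partial>M)"
      using D_simple_approx_nonneg[OF s]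
      by (intro nn_integral_eq_integral D_integrable s_L1) (auto elim: eventually_mono)
    then show "(\<integral>\<^sup>+x. ennreal (D (s k) x) \<partial>M) = ennreal (\<integral>x. s k x \<partial>M)"
      using D_integral[OF s_L1] by simp
  qed
  also have "\<dots> = ennreal (\<integral>x. f x \<partial>M)"
    by (rule SUP_integral_simple_approx[OF f s])
  finally show ?thesis .
qed

text \<open>By \<open>D_SUP_mono\<close> the choice of the approximation only matters on a null set.\<close>
definition T_nonneg :: "('a \<Rightarrow> real) \<Rightarrow> 'a \<Rightarrow> real" where
  "T_nonneg f x = enn2real (D_SUP (SOME s. s \<in> simple_approx M f) x)"

lemma some_simple_approx: "nonneg_integrable M f \<Longrightarrow> (SOME s. s \<in> simple_approx M f) \<in> simple_approx M f"
  using simple_approx_nonempty by (rule someI_ex)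

lemma borel_measurable_T_nonneg[measurable]: "nonneg_integrable M f \<Longrightarrow> T_nonneg f \<in> borel_measurable M"
  unfolding T_nonneg_def[abs_def] using some_simple_approx by measurable

lemma T_nonneg_nonneg[simp]: "0 \<le> T_nonneg f x"
  by (simp add: T_nonneg_def)

lemma T_nonneg_eq_D_SUP:
  assumes f: "nonneg_integrable M f" and s: "s \<in> simple_approx M f"
  shows "AE x in M. ennreal (T_nonneg f x) = D_SUP s x"
proof -
  let ?s = "SOME s. s \<in> simple_approx M f"
  have "AE x in M. D_SUP s x \<noteq> \<infinity>"
    by (rule nn_integral_PInf_AE) (use nn_integral_D_SUP[OF f s] s in auto)
  moreover have "AE x in M. D_SUP ?s x \<le> D_SUP s x"
    by (rule D_SUP_mono[OF some_simple_approx[OF f] s]) auto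
  moreover have "AE x in M. D_SUP s x \<le> D_SUP ?s x"
    by (rule D_SUP_mono[OF s some_simple_approx[OF f]]) auto
  ultimately show ?thesis
    by eventually_elim (simp add: T_nonneg_def ennreal_enn2real_if top_unique)
qed

lemma nn_integral_T_nonneg_eq_integral:
  assumes f: "nonneg_integrable M f"
  shows "(\<integral>\<^sup>+x. ennreal (T_nonneg f x) \<partial>M) = ennreal (\<integral>x. f x \<partial>M)"
  using nn_integral_cong_AE[OF T_nonneg_eq_D_SUP[OF f some_simple_approx[OF f]]]
    nn_integral_D_SUP[OF f some_simple_approx[OF f]] by simp

lemma integrable_T_nonneg:
  assumes f: "nonneg_integrable M f"
  shows "integrable M (T_nonneg f)"
  by (rule integrableI_nonneg) (use nn_integral_T_nonneg_eq_integral[OF f] f in auto)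

lemma integral_T_nonneg:
  assumes f: "nonneg_integrable M f"
  shows "(\<integral>x. T_nonneg f x \<partial>M) = (\<integral>x. f x \<partial>M)"
proof -
  have "ennreal (\<integral>x. T_nonneg f x \<partial>M) = ennreal (\<integral>x. f x \<partial>M)"
    using nn_integral_T_nonneg_eq_integral[OF f] nn_integral_eq_integral[OF integrable_T_nonneg[OF f]] by simp
  moreover have "0 \<le> (\<integral>x. f x \<partial>M)"
    using f by (auto simp: nonneg_integrable_def intro!: integral_nonneg_AE)
  ultimately show ?thesis
    by (simp add: integral_nonneg_AE)
qed

lemma nn_integral_T_nonneg:
  assumes f: "nonneg_integrable M f"
  shows "(\<integral>\<^sup>+x. ennreal (T_nonneg f x) \<partial>M) = (\<integral>\<^sup>+x. ennreal (f x) \<partial>M)"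
  using nn_integral_T_nonneg_eq_integral[OF f] nn_integral_eq_integral[of M f] f
  by (auto simp: nonneg_integrable_def)

lemma T_nonneg_mono:
  assumes f: "nonneg_integrable M f" and g: "nonneg_integrable M g" and le: "AE x in M. f x \<le> g x"
  shows "AE x in M. T_nonneg f x \<le> T_nonneg g x"
  using D_SUP_mono[OF some_simple_approx[OF f] some_simple_approx[OF g] le]
    T_nonneg_eq_D_SUP[OF f some_simple_approx[OF f]] T_nonneg_eq_D_SUP[OF g some_simple_approx[OF g]]
  by eventually_elim (metis ennreal_le_iff T_nonneg_nonneg)

lemma T_nonneg_cong:
  assumes f: "nonneg_integrable M f" and g: "nonneg_integrable M g" and eq: "AE x in M. f x = g x"
  shows "AE x in M. T_nonneg f x = T_nonneg g x"
proof -
  have "AE x in M. f x \<le> g x" "AE x in M. g x \<le> f x"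
    using eq by (auto elim!: eventually_mono)
  from T_nonneg_mono[OF f g this(1)] T_nonneg_mono[OF g f this(2)] show ?thesis
    by eventually_elim simp
qed

lemma T_nonneg_simple_L1:
  assumes f: "f \<in> simple_L1 M" and nonneg: "\<And>x. x \<in> space M \<Longrightarrow> 0 \<le> f x"
  shows "AE x in M. T_nonneg f x = D f x"
proof -
  have "AE x in M. 0 \<le> D f x"
    using D_nonneg[OF f] nonneg by auto
  moreover have "AE x in M. ennreal (T_nonneg f x) = D_SUP (\<lambda>k. f) x"
    using nonneg by (intro T_nonneg_eq_D_SUP nonneg_integrable_simple_L1 simple_approx_const f)
  ultimately show ?thesis
    by eventually_elim (simp add: D_SUP_def)
qed

lemma nn_set_integral_T_nonneg_simple_L1:
  assumes f: "f \<in> simple_L1 M" "\<And>x. x \<in> space M \<Longrightarrow> 0 \<le> f x" and E: "E \<in> sets M"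
  shows "(\<integral>\<^sup>+x. ennreal (T_nonneg f x) * indicator E x \<partial>M) = ennreal (\<integral>x. indicator E x * D f x \<partial>M)"
proof -
  have "AE x in M. T_nonneg f x = D f x"
    using T_nonneg_simple_L1[OF f] .
  then have "(\<integral>\<^sup>+x. ennreal (T_nonneg f x) * indicator E x \<partial>M) = (\<integral>\<^sup>+x. ennreal (indicator E x * D f x) \<partial>M)"
    by (intro nn_integral_cong_AE) (auto elim!: eventually_mono split: split_indicator)
  also have "\<dots> = ennreal (\<integral>x. indicator E x * D f x \<partial>M)"
    using D_nonneg[OF f(1)] f(2) integrable_real_mult_indicator[OF E D_integrable[OF f(1)]]
    by (intro nn_integral_eq_integral) (auto simp: mult.commute elim!: eventually_mono)
  finally show ?thesis .
qed

lemma T_nonneg_zero: "AE x in M. T_nonneg (\<lambda>x. 0) x = 0"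
proof -
  have "AE x in M. T_nonneg (\<lambda>x. 0) x = D (\<lambda>x. 0) x"
    by (rule T_nonneg_simple_L1[OF simple_L1_zero]) simp
  with D_zero show ?thesis
    by eventually_elim simp
qed

lemma T_nonneg_add:
  assumes f: "nonneg_integrable M f" and g: "nonneg_integrable M g"
  shows "AE x in M. T_nonneg (\<lambda>x. f x + g x) x = T_nonneg f x + T_nonneg g x"
proof -
  define s where "s = (SOME s. s \<in> simple_approx M f)"
  define t where "t = (SOME t. t \<in> simple_approx M g)"
  have s: "s \<in> simple_approx M f" and t: "t \<in> simple_approx M g"
    using some_simple_approx f g by (auto simp: s_def t_def)
  have "AE x in M. \<forall>k. D (\<lambda>x. s k x + t k x) x = D (s k) x + D (t k) x"
    unfolding AE_all_countable using simple_approxD(1)[OF s] simple_approxD(1)[OF t] by (auto intro: D_add)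
  then have "AE x in M. D_SUP (\<lambda>k x. s k x + t k x) x = D_SUP s x + D_SUP t x"
    using D_simple_approx_nonneg[OF s] D_simple_approx_nonneg[OF t]
      D_simple_approx_mono[OF s] D_simple_approx_mono[OF t]
  proof eventually_elim
    case (elim x)
    have "D_SUP (\<lambda>k x. s k x + t k x) x = (SUP k. ennreal (D (s k) x) + ennreal (D (t k) x))"
      unfolding D_SUP_def using elim by (simp add: ennreal_plus[symmetric] del: ennreal_plus)
    also have "\<dots> = D_SUP s x + D_SUP t x"
      unfolding D_SUP_def by (rule ennreal_SUP_add) (use elim in \<open>auto intro!: incseq_SucI ennreal_leI\<close>)
    finally show ?case .
  qed
  with T_nonneg_eq_D_SUP[OF nonneg_integrable_add[OF f g] simple_approx_add[OF s t]]
    T_nonneg_eq_D_SUP[OF f s] T_nonneg_eq_D_SUP[OF g t]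
  show ?thesis
    by eventually_elim (metis ennreal_inj ennreal_plus T_nonneg_nonneg add_nonneg_nonneg)
qed

lemma T_nonneg_cmult:
  assumes f: "nonneg_integrable M f" and c: "0 \<le> c"
  shows "AE x in M. T_nonneg (\<lambda>x. c * f x) x = c * T_nonneg f x"
proof -
  define s where "s = (SOME s. s \<in> simple_approx M f)"
  have s: "s \<in> simple_approx M f"
    using some_simple_approx f by (auto simp: s_def)
  have "AE x in M. \<forall>k. D (\<lambda>x. c * s k x) x = c * D (s k) x"
    unfolding AE_all_countable using simple_approxD(1)[OF s] by (auto intro: D_cmult)
  then have "AE x in M. D_SUP (\<lambda>k x. c * s k x) x = ennreal c * D_SUP s x"
  proof eventually_elim
    case (elim x)
    have "D_SUP (\<lambda>k x. c * s k x) x = (SUP k. ennreal c * ennreal (D (s k) x))"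
      unfolding D_SUP_def using elim c by (simp add: ennreal_mult')
    also have "\<dots> = ennreal c * D_SUP s x"
      unfolding D_SUP_def by (rule SUP_mult_left_ennreal[symmetric])
    finally show ?case .
  qed
  with T_nonneg_eq_D_SUP[OF nonneg_integrable_cmult[OF f c] simple_approx_cmult[OF s c]]
    T_nonneg_eq_D_SUP[OF f s]
  show ?thesis
    by eventually_elim (metis c ennreal_inj ennreal_mult' T_nonneg_nonneg mult_nonneg_nonneg)
qed

text \<open>The supremum lies below \<open>T_nonneg g\<close> and has the same integral.\<close>
lemma T_nonneg_SUP:
  assumes f: "\<And>k. nonneg_integrable M (f k)" and g: "nonneg_integrable M g"
    and mono: "\<And>k x. x \<in> space M \<Longrightarrow> f k x \<le> f (Suc k) x"
    and lim: "\<And>x. x \<in> space M \<Longrightarrow> (\<lambda>k. f k x) \<longlonglongrightarrow> g x"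
  shows "AE x in M. (SUP k. ennreal (T_nonneg (f k) x)) = ennreal (T_nonneg g x)"
proof -
  have le: "f k x \<le> g x" if "x \<in> space M" for k x
    using incseq_le[OF incseq_SucI[of "\<lambda>k. f k x", OF mono[OF that]] lim[OF that]] by simp
  have "AE x in M. \<forall>k. T_nonneg (f k) x \<le> T_nonneg g x"
    unfolding AE_all_countable using le by (auto intro!: T_nonneg_mono f g)
  then have SUP_le: "AE x in M. (SUP k. ennreal (T_nonneg (f k) x)) \<le> ennreal (T_nonneg g x)"
    by eventually_elim (auto intro!: SUP_least ennreal_leI)
  have "(\<integral>\<^sup>+x. (SUP k. ennreal (T_nonneg (f k) x)) \<partial>M) = (SUP k. \<integral>\<^sup>+x. ennreal (T_nonneg (f k) x) \<partial>M)"
  proof (rule nn_integral_monotone_convergence_SUP_AE)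
    show "AE x in M. ennreal (T_nonneg (f k) x) \<le> ennreal (T_nonneg (f (Suc k)) x)" for k
      using T_nonneg_mono[OF f f, of k "Suc k"] mono by (auto elim!: eventually_mono intro: ennreal_leI)
  qed (use f in simp)
  also have "\<dots> = (SUP k. ennreal (\<integral>x. f k x \<partial>M))"
    using nn_integral_T_nonneg_eq_integral[OF f] by simp
  also have "\<dots> = ennreal (\<integral>x. g x \<partial>M)"
    by (rule SUP_ennreal_integral_incseq) (use f g mono lim in \<open>auto simp: nonneg_integrable_def\<close>)
  also have "\<dots> = (\<integral>\<^sup>+x. ennreal (T_nonneg g x) \<partial>M)"
    using nn_integral_T_nonneg_eq_integral[OF g] by simp
  finally show ?thesis
    by (intro AE_eq_if_le_nn_integral_eq SUP_le) (use g f nn_integral_T_nonneg_eq_integral[OF g] in simp_all)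
qed

section \<open>The Markov extension\<close>

definition T :: "('a \<Rightarrow> real) \<Rightarrow> 'a \<Rightarrow> real" where
  "T f x = T_nonneg (pos_part f) x - T_nonneg (neg_part f) x"

lemma integrable_T: "integrable M f \<Longrightarrow> integrable M (T f)"
  unfolding T_def[abs_def]
  by (intro Bochner_Integration.integrable_diff integrable_T_nonneg nonneg_integrable_pos_part
      nonneg_integrable_neg_part)

lemma integral_T:
  assumes f: "integrable M f"
  shows "(\<integral>x. T f x \<partial>M) = (\<integral>x. f x \<partial>M)"
proof -
  have "(\<integral>x. T f x \<partial>M) = (\<integral>x. T_nonneg (pos_part f) x \<partial>M) - (\<integral>x. T_nonneg (neg_part f) x \<partial>M)"
    unfolding T_def using f
    by (intro Bochner_Integration.integral_diff integrable_T_nonneg nonneg_integrable_pos_part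
        nonneg_integrable_neg_part)
  also have "\<dots> = (\<integral>x. f x \<partial>M)"
    using f by (simp add: integral_T_nonneg nonneg_integrable_pos_part nonneg_integrable_neg_part
        integral_pos_part_minus_neg_part)
  finally show ?thesis .
qed

lemma T_cong:
  assumes f: "integrable M f" and g: "integrable M g" and eq: "AE x in M. f x = g x"
  shows "AE x in M. T f x = T g x"
proof -
  have "AE x in M. pos_part f x = pos_part g x" "AE x in M. neg_part f x = neg_part g x"
    using eq by (auto simp: pos_part_def neg_part_def elim!: eventually_mono)
  from T_nonneg_cong[OF nonneg_integrable_pos_part[OF f] nonneg_integrable_pos_part[OF g] this(1)]
    T_nonneg_cong[OF nonneg_integrable_neg_part[OF f] nonneg_integrable_neg_part[OF g] this(2)]
  show ?thesis
    by eventually_elim (simp add: T_def)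
qed

text \<open>For \<open>h = f + g\<close> we have \<open>h\<^sup>+ + (f\<^sup>- + g\<^sup>-) = h\<^sup>- + (f\<^sup>+ + g\<^sup>+)\<close>, an identity between
  nonnegative functions to which \<open>T_nonneg\<close> can be applied.\<close>
lemma T_add:
  assumes f: "integrable M f" and g: "integrable M g"
  shows "AE x in M. T (\<lambda>y. f y + g y) x = T f x + T g x"
proof -
  define h where "h = (\<lambda>y. f y + g y)"
  have h: "integrable M h"
    using f g by (simp add: h_def)
  have parts_eq: "(\<lambda>x. pos_part h x + (neg_part f x + neg_part g x))
      = (\<lambda>x. neg_part h x + (pos_part f x + pos_part g x))"
    by (auto simp: pos_part_def neg_part_def h_def fun_eq_iff)
  have "AE x in M. T_nonneg (\<lambda>x. pos_part h x + (neg_part f x + neg_part g x)) x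
      = T_nonneg (pos_part h) x + T_nonneg (\<lambda>x. neg_part f x + neg_part g x) x"
    by (intro T_nonneg_add nonneg_integrable_pos_part nonneg_integrable_neg_part nonneg_integrable_add h f g)
  moreover have "AE x in M. T_nonneg (\<lambda>x. neg_part f x + neg_part g x) x
      = T_nonneg (neg_part f) x + T_nonneg (neg_part g) x"
    by (intro T_nonneg_add nonneg_integrable_neg_part f g)
  moreover have "AE x in M. T_nonneg (\<lambda>x. neg_part h x + (pos_part f x + pos_part g x)) x
      = T_nonneg (neg_part h) x + T_nonneg (\<lambda>x. pos_part f x + pos_part g x) x"
    by (intro T_nonneg_add nonneg_integrable_pos_part nonneg_integrable_neg_part nonneg_integrable_add h f g)
  moreover have "AE x in M. T_nonneg (\<lambda>x. pos_part f x + pos_part g x) x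
      = T_nonneg (pos_part f) x + T_nonneg (pos_part g) x"
    by (intro T_nonneg_add nonneg_integrable_pos_part f g)
  ultimately show ?thesis
    unfolding h_def[symmetric] by eventually_elim (simp add: T_def parts_eq)
qed

lemma T_cmult:
  assumes f: "integrable M f"
  shows "AE x in M. T (\<lambda>y. c * f y) x = c * T f x"
proof (cases "0 \<le> c")
  case True
  have parts: "pos_part (\<lambda>y. c * f y) = (\<lambda>x. c * pos_part f x)"
      "neg_part (\<lambda>y. c * f y) = (\<lambda>x. c * neg_part f x)"
    using True by (auto simp: pos_part_def neg_part_def fun_eq_iff max_mult_distrib_left)
  from T_nonneg_cmult[OF nonneg_integrable_pos_part[OF f] True]
    T_nonneg_cmult[OF nonneg_integrable_neg_part[OF f] True]
  show ?thesis
    by eventually_elim (simp add: T_def parts algebra_simps)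
next
  case False
  then have c: "0 \<le> - c"
    by simp
  have parts: "pos_part (\<lambda>y. c * f y) = (\<lambda>x. (- c) * neg_part f x)"
      "neg_part (\<lambda>y. c * f y) = (\<lambda>x. (- c) * pos_part f x)"
    using False by (auto simp: pos_part_def neg_part_def fun_eq_iff max_def mult_le_0_iff zero_le_mult_iff)
  from T_nonneg_cmult[OF nonneg_integrable_pos_part[OF f] c]
    T_nonneg_cmult[OF nonneg_integrable_neg_part[OF f] c]
  show ?thesis
    by eventually_elim (simp add: T_def parts algebra_simps)
qed

lemma T_preserves_nonneg:
  assumes f: "integrable M f" and nonneg: "AE x in M. 0 \<le> f x"
  shows "AE x in M. 0 \<le> T f x"
proof -
  have "AE x in M. neg_part f x = 0"
    using nonneg by (auto simp: neg_part_def elim!: eventually_mono)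
  from T_nonneg_cong[OF nonneg_integrable_neg_part[OF f] nonneg_integrable_zero this] T_nonneg_zero
  show ?thesis
    by eventually_elim (simp add: T_def)
qed

lemma markov_operator_T: "markov_operator M T"
  unfolding markov_operator_def l1_operator_def
  using integrable_T T_cong T_add T_cmult T_preserves_nonneg integral_T by blast

lemma T_simple_L1:
  assumes f: "f \<in> simple_L1 M"
  shows "AE x in M. T f x = D f x"
proof -
  have pos: "pos_part f \<in> simple_L1 M" and neg: "neg_part f \<in> simple_L1 M"
    using simple_L1_pos_part[OF f] simple_L1_neg_part[OF f] .
  have f_eq: "(\<lambda>x. pos_part f x - neg_part f x) = f"
    by (simp add: pos_part_minus_neg_part)
  from T_nonneg_simple_L1[OF pos pos_part_nonneg] T_nonneg_simple_L1[OF neg neg_part_nonneg] D_diff[OF pos neg]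
  show ?thesis
    by eventually_elim (simp_all add: T_def f_eq)
qed

text \<open>A positive extension dominates every \<open>D s\<^sub>k\<close>, hence \<open>T_nonneg F\<close>; equality of the
  integrals forces equality a.e.\<close>
lemma markov_extension_eq_T_nonneg:
  assumes T': "markov_operator M T'" and ext: "\<forall>f\<in>simple_L1 M. AE x in M. T' f x = D f x"
    and F: "nonneg_integrable M F"
  shows "AE x in M. T' F x = T_nonneg F x"
proof -
  define s where "s = (SOME s. s \<in> simple_approx M F)"
  have s: "s \<in> simple_approx M F"
    using some_simple_approx[OF F] by (simp add: s_def)
  have F_int: "integrable M F"
    using F by (rule nonneg_integrableD)
  have T'_int: "integrable M (T' F)"
    using T' F_int by (simp add: markov_operator_def l1_operator_def)
  have "AE x in M. D (s k) x \<le> T' F x" for k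
  proof -
    have sk: "s k \<in> simple_L1 M"
      using simple_approxD(1)[OF s] .
    have "AE x in M. T' (s k) x \<le> T' F x"
      by (rule markov_operator_mono[OF T' _ F_int]) (use sk simple_approx_le[OF s] in \<open>auto simp: simple_L1_def\<close>)
    with ext sk show ?thesis
      by (auto elim: AE_mp)
  qed
  then have "AE x in M. \<forall>k. D (s k) x \<le> T' F x"
    by (simp add: AE_all_countable)
  then have "AE x in M. D_SUP s x \<le> ennreal (T' F x)"
    by eventually_elim (auto simp: D_SUP_def intro!: SUP_least ennreal_leI)
  moreover have "AE x in M. 0 \<le> T' F x"
    using T' F_int F unfolding markov_operator_def nonneg_integrable_def by auto
  moreover note T_nonneg_eq_D_SUP[OF F s]
  ultimately have le: "AE x in M. T_nonneg F x \<le> T' F x"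
  proof eventually_elim
    case (elim x)
    then have "ennreal (T_nonneg F x) \<le> ennreal (T' F x)"
      by simp
    with elim(2) show ?case
      by (simp add: ennreal_le_iff)
  qed
  have "(\<integral>x. T' F x - T_nonneg F x \<partial>M) = 0"
    using T' F_int integral_T_nonneg[OF F] T'_int integrable_T_nonneg[OF F] by (simp add: markov_operator_def)
  then have "AE x in M. T' F x - T_nonneg F x = 0"
    using T'_int integrable_T_nonneg[OF F] le
    by (subst (asm) integral_nonneg_eq_0_iff_AE) (auto elim!: eventually_mono)
  then show ?thesis
    by (auto elim!: eventually_mono)
qed

lemma markov_extension_unique:
  assumes T': "markov_operator M T'" and ext: "\<forall>f\<in>simple_L1 M. AE x in M. T' f x = D f x"
    and f: "integrable M f"
  shows "AE x in M. T' f x = T f x"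
proof -
  have l1: "l1_operator M T'"
    using T' by (simp add: markov_operator_def)
  have f_eq: "(\<lambda>x. pos_part f x + (-1) * neg_part f x) = f"
    by (auto simp: pos_part_def neg_part_def fun_eq_iff)
  have "AE x in M. T' (\<lambda>x. pos_part f x + (\<lambda>x. (-1) * neg_part f x) x) x
      = T' (pos_part f) x + T' (\<lambda>x. (-1) * neg_part f x) x"
    using l1 integrable_pos_part[OF f] integrable_neg_part[OF f] unfolding l1_operator_def by blast
  then have "AE x in M. T' f x = T' (pos_part f) x + T' (\<lambda>x. (-1) * neg_part f x) x"
    unfolding f_eq .
  moreover have "AE x in M. T' (\<lambda>x. (-1) * neg_part f x) x = (-1) * T' (neg_part f) x"
    using l1 integrable_neg_part[OF f] unfolding l1_operator_def by blast
  moreover note markov_extension_eq_T_nonneg[OF T' ext nonneg_integrable_pos_part[OF f]]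
    markov_extension_eq_T_nonneg[OF T' ext nonneg_integrable_neg_part[OF f]]
  ultimately show ?thesis
    by eventually_elim (simp add: T_def)
qed

lemma markov_extensions_agree:
  assumes "markov_operator M T1" "\<forall>f\<in>simple_L1 M. AE x in M. T1 f x = D f x"
    and "markov_operator M T2" "\<forall>f\<in>simple_L1 M. AE x in M. T2 f x = D f x" and "integrable M f"
  shows "AE x in M. T1 f x = T2 f x"
  using markov_extension_unique[OF assms(1,2,5)] markov_extension_unique[OF assms(3,4,5)]
  by eventually_elim simp

end

section \<open>The adjoint of the extension\<close>

lemma (in sigma_finite_measure) Ex_positive_integrable_real:
  "\<exists>w :: 'a \<Rightarrow> real. integrable M w \<and> (\<forall>x\<in>space M. 0 < w x) \<and> (\<forall>x. 0 \<le> w x)"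
proof -
  obtain h where h[measurable]: "h \<in> borel_measurable M" and h_fin: "integral\<^sup>N M h \<noteq> \<infinity>"
    and h_pos: "\<And>x. x \<in> space M \<Longrightarrow> 0 < h x \<and> h x < \<infinity>"
    using Ex_finite_integrable_function by blast
  have "(\<integral>\<^sup>+x. ennreal (enn2real (h x)) \<partial>M) = (\<integral>\<^sup>+x. h x \<partial>M)"
  proof (rule nn_integral_cong)
    fix x assume "x \<in> space M"
    with h_pos[of x] show "ennreal (enn2real (h x)) = h x"
      by (auto intro: ennreal_enn2real)
  qed
  then have "integrable M (\<lambda>x. enn2real (h x))"
    using h_fin by (intro integrableI_nonneg) (auto simp: less_top)
  moreover have "0 < enn2real (h x)" if "x \<in> space M" for x
    using h_pos[OF that] by (auto simp: enn2real_positive_iff)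
  ultimately have "integrable M (\<lambda>x. enn2real (h x)) \<and> (\<forall>x\<in>space M. 0 < enn2real (h x)) \<and>
      (\<forall>x. 0 \<le> enn2real (h x))"
    by simp
  then show ?thesis
    by blast
qed

locale stochastic_on_simple_L1 = markov_on_simple_L1 M D + sigma_finite_measure M
  for M :: "'a measure" and D :: "('a \<Rightarrow> real) \<Rightarrow> 'a \<Rightarrow> real" +
  fixes A :: "nat \<Rightarrow> 'a set"
  assumes A_sets: "\<And>n. A n \<in> sets M" and A_finite: "\<And>n. emeasure M (A n) < \<infinity>"
    and A_incseq: "incseq A" and A_cover: "(\<Union>n. A n) = space M"
    and D_indicator_lim: "\<And>E. E \<in> sets M \<Longrightarrow> emeasure M E < \<infinity> \<Longrightarrow>
       (\<lambda>n. \<integral>x. indicator E x * D (indicator (A n)) x \<partial>M) \<longlonglongrightarrow> measure M E"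
begin

text \<open>The strictly positive integrable weight makes \<open>weight \<cdot> \<chi>\<^sub>E\<close> integrable for every
  measurable \<open>E\<close>, so that \<open>T_nonneg\<close> can be applied to it.\<close>
definition weight :: "'a \<Rightarrow> real" where
  "weight = (SOME w. integrable M w \<and> (\<forall>x\<in>space M. 0 < w x) \<and> (\<forall>x. 0 \<le> w x))"

lemma weight: "integrable M weight" "x \<in> space M \<Longrightarrow> 0 < weight x" "0 \<le> weight x"
  using someI_ex[OF Ex_positive_integrable_real] unfolding weight_def by auto

lemma borel_measurable_weight[measurable]: "weight \<in> borel_measurable M"
  using weight(1) by auto

lemma nonneg_integrable_weight_mult:
  "integrable M (\<lambda>x. weight x * u x) \<Longrightarrow> (\<And>x. 0 \<le> u x) \<Longrightarrow> nonneg_integrable M (\<lambda>x. weight x * u x)"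
  using weight(3) by (auto simp: nonneg_integrable_def)

lemma nonneg_integrable_weight_indicator: "E \<in> sets M \<Longrightarrow> nonneg_integrable M (\<lambda>x. weight x * indicator E x)"
  using weight by (auto simp: nonneg_integrable_def intro!: integrable_real_mult_indicator)

definition adjoint_functional :: "('a \<Rightarrow> real) \<Rightarrow> ('a \<Rightarrow> real) \<Rightarrow> ennreal" where
  "adjoint_functional g u = (\<integral>\<^sup>+x. ennreal (g x) * ennreal (T_nonneg (\<lambda>y. weight y * u y) x) \<partial>M)"

lemma adjoint_functional_null:
  assumes "AE x in M. u x = 0" "integrable M (\<lambda>x. weight x * u x)" "\<And>x. 0 \<le> u x"
  shows "adjoint_functional g u = 0"
proof -
  have "AE x in M. T_nonneg (\<lambda>y. weight y * u y) x = T_nonneg (\<lambda>x. 0) x"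
    using assms by (intro T_nonneg_cong nonneg_integrable_weight_mult nonneg_integrable_zero) auto
  with T_nonneg_zero have "AE x in M. T_nonneg (\<lambda>y. weight y * u y) x = 0"
    by eventually_elim simp
  then have "adjoint_functional g u = (\<integral>\<^sup>+x. 0 \<partial>M)"
    unfolding adjoint_functional_def by (intro nn_integral_cong_AE) (auto elim!: eventually_mono)
  then show ?thesis
    by simp
qed

lemma adjoint_functional_cmult:
  assumes [measurable]: "g \<in> borel_measurable M"
    and u: "nonneg_integrable M (\<lambda>x. weight x * u x)" and c: "0 \<le> c"
  shows "adjoint_functional g (\<lambda>x. c * u x) = ennreal c * adjoint_functional g u"
proof -
  have "(\<lambda>y. weight y * (c * u y)) = (\<lambda>y. c * (weight y * u y))"
    by (auto simp: fun_eq_iff)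
  with T_nonneg_cmult[OF u c] have "AE x in M. T_nonneg (\<lambda>y. weight y * (c * u y)) x
      = c * T_nonneg (\<lambda>y. weight y * u y) x"
    by simp
  then have "adjoint_functional g (\<lambda>x. c * u x)
      = (\<integral>\<^sup>+x. ennreal c * (ennreal (g x) * ennreal (T_nonneg (\<lambda>y. weight y * u y) x)) \<partial>M)"
    unfolding adjoint_functional_def using c
    by (intro nn_integral_cong_AE) (auto elim!: eventually_mono simp: ennreal_mult mult.left_commute)
  also have "\<dots> = ennreal c * adjoint_functional g u"
    unfolding adjoint_functional_def by (rule nn_integral_cmult) (use u in measurable)
  finally show ?thesis .
qed

lemma adjoint_functional_add:
  assumes [measurable]: "g \<in> borel_measurable M"
    and u: "nonneg_integrable M (\<lambda>x. weight x * u x)" and v: "nonneg_integrable M (\<lambda>x. weight x * v x)"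
  shows "adjoint_functional g (\<lambda>x. u x + v x) = adjoint_functional g u + adjoint_functional g v"
proof -
  have "(\<lambda>y. weight y * (u y + v y)) = (\<lambda>y. weight y * u y + weight y * v y)"
    by (auto simp: fun_eq_iff algebra_simps)
  with T_nonneg_add[OF u v] have "AE x in M. T_nonneg (\<lambda>y. weight y * (u y + v y)) x
      = T_nonneg (\<lambda>y. weight y * u y) x + T_nonneg (\<lambda>y. weight y * v y) x"
    by simp
  then have "adjoint_functional g (\<lambda>x. u x + v x)
      = (\<integral>\<^sup>+x. ennreal (g x) * ennreal (T_nonneg (\<lambda>y. weight y * u y) x)
          + ennreal (g x) * ennreal (T_nonneg (\<lambda>y. weight y * v y) x) \<partial>M)"
    unfolding adjoint_functional_def
    by (intro nn_integral_cong_AE) (auto elim!: eventually_mono simp: distrib_left)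
  also have "\<dots> = adjoint_functional g u + adjoint_functional g v"
    unfolding adjoint_functional_def by (rule nn_integral_add) (use u v in measurable)
  finally show ?thesis .
qed

lemma adjoint_functional_SUP:
  assumes [measurable]: "g \<in> borel_measurable M"
    and U: "\<And>i. nonneg_integrable M (\<lambda>x. weight x * U i x)" and u: "nonneg_integrable M (\<lambda>x. weight x * u x)"
    and mono: "\<And>i x. U i x \<le> U (Suc i) x" and lim: "\<And>x. x \<in> space M \<Longrightarrow> (\<lambda>i. U i x) \<longlonglongrightarrow> u x"
  shows "adjoint_functional g u = (SUP i. adjoint_functional g (U i))"
proof -
  have T_mono: "AE x in M. T_nonneg (\<lambda>y. weight y * U i y) x \<le> T_nonneg (\<lambda>y. weight y * U (Suc i) y) x" for i
    using mono weight(3) by (intro T_nonneg_mono U) (auto intro!: mult_left_mono)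
  have "AE x in M. (SUP i. ennreal (T_nonneg (\<lambda>y. weight y * U i y) x))
      = ennreal (T_nonneg (\<lambda>y. weight y * u y) x)"
    using mono weight(3) lim by (intro T_nonneg_SUP U u) (auto intro!: mult_left_mono tendsto_mult)
  then have "adjoint_functional g u
      = (\<integral>\<^sup>+x. (SUP i. ennreal (g x) * ennreal (T_nonneg (\<lambda>y. weight y * U i y) x)) \<partial>M)"
    unfolding adjoint_functional_def
    by (intro nn_integral_cong_AE) (auto elim!: eventually_mono simp: SUP_mult_left_ennreal[symmetric])
  also have "\<dots> = (SUP i. adjoint_functional g (U i))"
    unfolding adjoint_functional_def
  proof (rule nn_integral_monotone_convergence_SUP_AE)
    show "AE x in M. ennreal (g x) * ennreal (T_nonneg (\<lambda>y. weight y * U i y) x)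
        \<le> ennreal (g x) * ennreal (T_nonneg (\<lambda>y. weight y * U (Suc i) y) x)" for i
      using T_mono[of i] by (auto elim!: eventually_mono intro!: mult_left_mono ennreal_leI)
  qed (use U in simp)
  finally show ?thesis .
qed

lemma adjoint_functional_sum:
  assumes [measurable]: "g \<in> borel_measurable M" and "finite I"
    and u: "\<And>i. i \<in> I \<Longrightarrow> integrable M (\<lambda>x. weight x * u i x)" "\<And>i x. 0 \<le> u i x"
  shows "adjoint_functional g (\<lambda>x. \<Sum>i\<in>I. u i x) = (\<Sum>i\<in>I. adjoint_functional g (u i))"
  using \<open>finite I\<close> u(1)
proof (induction I rule: finite_induct)
  case empty
  then show ?case
    by (simp add: adjoint_functional_null)
next
  case (insert i I)
  have "integrable M (\<lambda>x. weight x * (\<Sum>i\<in>I. u i x))"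
    using insert by (simp add: sum_distrib_left)
  with insert u(2) show ?case
    by (simp add: adjoint_functional_add nonneg_integrable_weight_mult sum_nonneg)
qed

definition adjoint_measure :: "('a \<Rightarrow> real) \<Rightarrow> 'a measure" where
  "adjoint_measure g = measure_of (space M) (sets M) (\<lambda>E. adjoint_functional g (indicator E))"

lemma sets_adjoint_measure[simp, measurable_cong]: "sets (adjoint_measure g) = sets M"
  unfolding adjoint_measure_def by (simp add: sets.space_closed)

lemma space_adjoint_measure[simp]: "space (adjoint_measure g) = space M"
  using sets_eq_imp_space_eq[OF sets_adjoint_measure] .

lemma countably_additive_adjoint_functional:
  assumes [measurable]: "g \<in> borel_measurable M"
  shows "countably_additive (sets M) (\<lambda>E. adjoint_functional g (indicator E))"
proof (rule countably_additiveI)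
  fix E :: "nat \<Rightarrow> 'a set"
  assume E: "range E \<subseteq> sets M" "disjoint_family E" "(\<Union>i. E i) \<in> sets M"
  have w_E: "integrable M (\<lambda>x. weight x * indicator (E i) x)" for i
    using nonneg_integrable_weight_indicator[of "E i"] E(1) by (auto dest: nonneg_integrableD)
  have partial_sums: "nonneg_integrable M (\<lambda>x. weight x * (\<Sum>i<n. indicator (E i) x))" for n
  proof -
    have "integrable M (\<lambda>x. weight x * (\<Sum>i<n. indicator (E i) x))"
      unfolding sum_distrib_left by (intro Bochner_Integration.integrable_sum w_E)
    then show ?thesis
      using weight(3) by (auto simp: nonneg_integrable_def intro!: mult_nonneg_nonneg sum_nonneg)
  qed
  have "(\<lambda>n. \<Sum>i<n. indicator (E i) x) \<longlonglongrightarrow> (indicator (\<Union>i. E i) x :: real)" for x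
    using indicator_sums[of E x] E(2) by (simp add: sums_def disjoint_family_on_def)
  then have "adjoint_functional g (indicator (\<Union>i. E i))
      = (SUP n. adjoint_functional g (\<lambda>x. \<Sum>i<n. indicator (E i) x))"
    by (intro adjoint_functional_SUP partial_sums nonneg_integrable_weight_indicator E(3)) auto
  also have "\<dots> = (SUP n. \<Sum>i<n. adjoint_functional g (indicator (E i)))"
    using w_E by (simp add: adjoint_functional_sum)
  also have "\<dots> = (\<Sum>i. adjoint_functional g (indicator (E i)))"
    by (rule suminf_eq_SUP[symmetric])
  finally show "(\<Sum>i. adjoint_functional g (indicator (E i))) = adjoint_functional g (indicator (\<Union>i. E i))"
    by simp
qed

lemma emeasure_adjoint_measure:
  assumes "g \<in> borel_measurable M" "E \<in> sets M"
  shows "emeasure (adjoint_measure g) E = adjoint_functional g (indicator E)"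
  unfolding adjoint_measure_def
proof (rule emeasure_measure_of_sigma)
  show "positive (sets M) (\<lambda>E. adjoint_functional g (indicator E))"
    using weight(1) by (auto simp: positive_def intro!: adjoint_functional_null)
qed (use assms countably_additive_adjoint_functional sets.sigma_algebra_axioms in auto)

lemma absolutely_continuous_adjoint_measure:
  assumes "g \<in> borel_measurable M"
  shows "absolutely_continuous M (adjoint_measure g)"
  unfolding absolutely_continuous_def
proof
  fix E assume E: "E \<in> null_sets M"
  then have "AE x in M. indicator E x = (0::real)"
    by (auto intro: AE_not_in elim!: eventually_mono split: split_indicator)
  then have "adjoint_functional g (indicator E) = 0"
    using E by (intro adjoint_functional_null) (auto intro!: integrable_real_mult_indicator weight(1))
  then show "E \<in> null_sets (adjoint_measure g)"
    using E assms by (simp add: null_sets_def emeasure_adjoint_measure)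
qed

lemma nn_integral_adjoint_measure:
  assumes g[measurable]: "g \<in> borel_measurable M"
    and u: "u \<in> borel_measurable M" "\<And>x. 0 \<le> u x" and w_u: "integrable M (\<lambda>x. weight x * u x)"
  shows "(\<integral>\<^sup>+x. ennreal (u x) \<partial>adjoint_measure g) = adjoint_functional g u"
  using borel_measurable_weight weight(3) u w_u
proof (induction u rule: borel_measurable_induct_weighted)
  case (set E)
  then show ?case
    by (simp add: ennreal_indicator emeasure_adjoint_measure)
next
  case (mult u c)
  have "(\<integral>\<^sup>+x. ennreal (c * u x) \<partial>adjoint_measure g) = ennreal c * (\<integral>\<^sup>+x. ennreal (u x) \<partial>adjoint_measure g)"
    using mult.hyps by (simp add: ennreal_mult nn_integral_cmult)
  with mult show ?case
    by (simp add: adjoint_functional_cmult nonneg_integrable_weight_mult)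
next
  case (add u v)
  have "(\<integral>\<^sup>+x. ennreal (v x + u x) \<partial>adjoint_measure g)
      = (\<integral>\<^sup>+x. ennreal (v x) \<partial>adjoint_measure g) + (\<integral>\<^sup>+x. ennreal (u x) \<partial>adjoint_measure g)"
    using add.hyps by (simp add: ennreal_plus nn_integral_add)
  with add show ?case
    by (simp add: adjoint_functional_add nonneg_integrable_weight_mult)
next
  case (seq U)
  have inc: "incseq (\<lambda>i. U i x)" for x
    using seq.hyps(4) by (auto simp: incseq_def le_fun_def)
  have SUP_U: "(SUP i. ennreal (U i x)) = ennreal (u x)" if "x \<in> space M" for x
  proof -
    have "incseq (\<lambda>i. ennreal (U i x))"
      using inc by (auto simp: incseq_def intro: ennreal_leI)
    from LIMSEQ_unique[OF LIMSEQ_SUP[OF this] tendsto_ennrealI[OF seq.hyps(5)[OF that]]]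
    show ?thesis .
  qed
  have "(\<integral>\<^sup>+x. ennreal (u x) \<partial>adjoint_measure g) = (\<integral>\<^sup>+x. (SUP i. ennreal (U i x)) \<partial>adjoint_measure g)"
    using SUP_U by (intro nn_integral_cong) simp
  also have "\<dots> = (SUP i. \<integral>\<^sup>+x. ennreal (U i x) \<partial>adjoint_measure g)"
  proof (rule nn_integral_monotone_convergence_SUP)
    show "incseq (\<lambda>i x. ennreal (U i x))"
      using inc by (auto simp: incseq_def le_fun_def intro: ennreal_leI)
  qed (use seq.hyps in measurable)
  also have "\<dots> = (SUP i. adjoint_functional g (U i))"
    using seq.IH by simp
  also have "\<dots> = adjoint_functional g u"
    using seq.hyps inc u(2) w_u
    by (intro adjoint_functional_SUP[symmetric] nonneg_integrable_weight_mult) (auto simp: incseq_Suc_iff)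
  finally show ?case .
qed

lemma nn_set_integral_RN_deriv_adjoint_measure:
  assumes "g \<in> borel_measurable M" "E \<in> sets M"
  shows "(\<integral>\<^sup>+x. RN_deriv M (adjoint_measure g) x * indicator E x \<partial>M) = adjoint_functional g (indicator E)"
  using RN_deriv_nn_integral[OF absolutely_continuous_adjoint_measure sets_adjoint_measure, of g "indicator E"]
    assms by (simp add: emeasure_adjoint_measure)

lemma RN_deriv_adjoint_measure_le:
  assumes g[measurable]: "g \<in> borel_measurable M" and C: "0 \<le> C" and g_le: "AE x in M. g x \<le> C"
  shows "AE x in M. RN_deriv M (adjoint_measure g) x \<le> ennreal (C * weight x)"
proof (rule AE_le_if_nn_set_integral_le)
  fix E assume E[measurable]: "E \<in> sets M" "emeasure M E < \<infinity>"
  have "(\<integral>\<^sup>+x. RN_deriv M (adjoint_measure g) x * indicator E x \<partial>M) = adjoint_functional g (indicator E)"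
    by (rule nn_set_integral_RN_deriv_adjoint_measure[OF g E(1)])
  also have "\<dots> \<le> (\<integral>\<^sup>+x. ennreal C * ennreal (T_nonneg (\<lambda>y. weight y * indicator E y) x) \<partial>M)"
    unfolding adjoint_functional_def using g_le
    by (intro nn_integral_mono_AE) (auto elim!: eventually_mono intro!: mult_right_mono ennreal_leI)
  also have "\<dots> = ennreal C * (\<integral>\<^sup>+x. ennreal (weight x * indicator E x) \<partial>M)"
    using nonneg_integrable_weight_indicator[OF E(1)] by (simp add: nn_integral_cmult nn_integral_T_nonneg)
  also have "\<dots> = (\<integral>\<^sup>+x. ennreal (C * weight x) * indicator E x \<partial>M)"
    using C weight(3) by (subst nn_integral_cmult[symmetric]) (auto intro!: nn_integral_cong
        simp: ennreal_mult split: split_indicator)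
  finally show "(\<integral>\<^sup>+x. RN_deriv M (adjoint_measure g) x * indicator E x \<partial>M)
      \<le> (\<integral>\<^sup>+x. ennreal (C * weight x) * indicator E x \<partial>M)" .
qed simp_all

text \<open>\<open>T_adjoint_nonneg g\<close> is the adjoint applied to the positive part of \<open>g\<close>: the
  factor \<open>ennreal (g x)\<close> in \<open>adjoint_functional\<close> truncates negative values.\<close>
definition T_adjoint_nonneg :: "('a \<Rightarrow> real) \<Rightarrow> 'a \<Rightarrow> real" where
  "T_adjoint_nonneg g x = enn2real (RN_deriv M (adjoint_measure g) x) / weight x"

lemma borel_measurable_T_adjoint_nonneg[measurable]: "T_adjoint_nonneg g \<in> borel_measurable M"
  unfolding T_adjoint_nonneg_def[abs_def] by measurable

lemma T_adjoint_nonneg_nonneg[simp]: "0 \<le> T_adjoint_nonneg g x"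
  unfolding T_adjoint_nonneg_def using weight(3)[of x] by simp

lemma T_adjoint_nonneg_le:
  assumes "g \<in> borel_measurable M" "0 \<le> C" "AE x in M. g x \<le> C"
  shows "AE x in M. T_adjoint_nonneg g x \<le> C"
  using RN_deriv_adjoint_measure_le[OF assms] AE_space
proof eventually_elim
  case (elim x)
  then have w: "0 < weight x"
    using weight(2) by simp
  have "enn2real (RN_deriv M (adjoint_measure g) x) \<le> C * weight x"
    using elim(1) assms(2) w by (intro enn2real_leI) auto
  with w show ?case
    by (simp add: T_adjoint_nonneg_def divide_le_eq)
qed

lemma T_adjoint_nonneg_mult_weight:
  assumes "g \<in> borel_measurable M" "0 \<le> C" "AE x in M. g x \<le> C"
  shows "AE x in M. ennreal (T_adjoint_nonneg g x) * ennreal (weight x) = RN_deriv M (adjoint_measure g) x"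
  using RN_deriv_adjoint_measure_le[OF assms] AE_space
proof eventually_elim
  case (elim x)
  then have w: "0 < weight x"
    using weight(2) by simp
  have "RN_deriv M (adjoint_measure g) x < top"
    using elim(1) by (simp add: le_less_trans)
  moreover have "T_adjoint_nonneg g x * weight x = enn2real (RN_deriv M (adjoint_measure g) x)"
    using w by (simp add: T_adjoint_nonneg_def)
  ultimately show ?case
    by (simp add: ennreal_mult'[symmetric] ennreal_enn2real)
qed

lemma nn_integral_T_adjoint_nonneg_mult:
  assumes g[measurable]: "g \<in> borel_measurable M" and C: "0 \<le> C" and g_le: "AE x in M. g x \<le> C"
    and f: "nonneg_integrable M f"
  shows "(\<integral>\<^sup>+x. ennreal (T_adjoint_nonneg g x) * ennreal (f x) \<partial>M)
    = (\<integral>\<^sup>+x. ennreal (g x) * ennreal (T_nonneg f x) \<partial>M)"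
proof -
  \<comment> \<open>\<open>pos_part\<close> makes \<open>\<phi>\<close> nonnegative also outside \<open>space M\<close>, where \<open>f\<close> is arbitrary\<close>
  define \<phi> where "\<phi> x = pos_part f x / weight x" for x
  have \<phi>_meas[measurable]: "\<phi> \<in> borel_measurable M"
    using f unfolding \<phi>_def[abs_def] by measurable
  have \<phi>_nonneg: "0 \<le> \<phi> x" for x
    using weight(3)[of x] by (simp add: \<phi>_def)
  have weight_\<phi>: "weight x * \<phi> x = f x" if "x \<in> space M" for x
    using weight(2)[OF that] nonneg_integrableD(2)[OF f that] by (simp add: \<phi>_def pos_part_def)
  have w_\<phi>: "integrable M (\<lambda>x. weight x * \<phi> x)"
    using nonneg_integrableD(1)[OF f] by (rule Bochner_Integration.integrable_cong[THEN iffD1, rotated 2])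
      (auto simp: weight_\<phi>)
  have "(\<integral>\<^sup>+x. ennreal (T_adjoint_nonneg g x) * ennreal (f x) \<partial>M)
      = (\<integral>\<^sup>+x. RN_deriv M (adjoint_measure g) x * ennreal (\<phi> x) \<partial>M)"
  proof (rule nn_integral_cong_AE)
    show "AE x in M. ennreal (T_adjoint_nonneg g x) * ennreal (f x)
        = RN_deriv M (adjoint_measure g) x * ennreal (\<phi> x)"
      using T_adjoint_nonneg_mult_weight[OF g C g_le] AE_space
    proof eventually_elim
      case (elim x)
      have "ennreal (f x) = ennreal (weight x) * ennreal (\<phi> x)"
        using weight_\<phi>[OF elim(2)] weight(3)[of x] \<phi>_nonneg[of x] by (simp add: ennreal_mult[symmetric])
      with elim(1) show ?case
        by (simp add: mult.assoc[symmetric])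
    qed
  qed
  also have "\<dots> = (\<integral>\<^sup>+x. ennreal (\<phi> x) \<partial>adjoint_measure g)"
    by (rule RN_deriv_nn_integral[symmetric]) (auto intro: absolutely_continuous_adjoint_measure)
  also have "\<dots> = adjoint_functional g \<phi>"
    by (rule nn_integral_adjoint_measure[OF g \<phi>_meas \<phi>_nonneg w_\<phi>])
  also have "\<dots> = (\<integral>\<^sup>+x. ennreal (g x) * ennreal (T_nonneg f x) \<partial>M)"
    unfolding adjoint_functional_def
  proof (rule nn_integral_cong_AE)
    have "AE x in M. T_nonneg (\<lambda>y. weight y * \<phi> y) x = T_nonneg f x"
      using w_\<phi> \<phi>_nonneg weight_\<phi> by (intro T_nonneg_cong nonneg_integrable_weight_mult f) auto
    then show "AE x in M. ennreal (g x) * ennreal (T_nonneg (\<lambda>y. weight y * \<phi> y) x)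
        = ennreal (g x) * ennreal (T_nonneg f x)"
      by eventually_elim simp
  qed
  finally show ?thesis .
qed

lemma T_nonneg_indicator_A_mono:
  "AE x in M. T_nonneg (indicator (A n)) x \<le> T_nonneg (indicator (A (Suc n))) x"
  using A_incseq
  by (intro T_nonneg_mono nonneg_integrable_indicator A_sets A_finite AE_I2)
    (auto simp: incseq_Suc_iff split: split_indicator)

lemma nn_set_integral_SUP_T_nonneg_indicator:
  assumes E[measurable]: "E \<in> sets M" "emeasure M E < \<infinity>"
  shows "(\<integral>\<^sup>+x. (SUP n. ennreal (T_nonneg (indicator (A n)) x)) * indicator E x \<partial>M) = emeasure M E"
proof -
  have [measurable]: "T_nonneg (indicator (A n)) \<in> borel_measurable M" for n
    using nonneg_integrable_indicator[OF A_sets A_finite] by measurable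
  have integral_eq: "(\<integral>\<^sup>+x. ennreal (T_nonneg (indicator (A n)) x) * indicator E x \<partial>M)
      = ennreal (\<integral>x. indicator E x * D (indicator (A n)) x \<partial>M)" for n
    using simple_L1_indicator[OF A_sets A_finite] E(1) by (intro nn_set_integral_T_nonneg_simple_L1) auto
  have mono: "AE x in M. ennreal (T_nonneg (indicator (A n)) x) * indicator E x
      \<le> ennreal (T_nonneg (indicator (A (Suc n))) x) * indicator E x" for n
    using T_nonneg_indicator_A_mono[of n] by eventually_elim (auto intro!: mult_right_mono ennreal_leI)
  have "incseq (\<lambda>n. ennreal (\<integral>x. indicator E x * D (indicator (A n)) x \<partial>M))"
    unfolding integral_eq[symmetric] by (intro incseq_SucI nn_integral_mono_AE mono)
  from LIMSEQ_unique[OF LIMSEQ_SUP[OF this] tendsto_ennrealI[OF D_indicator_lim[OF E]]]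
  have SUP_eq: "(SUP n. \<integral>\<^sup>+x. ennreal (T_nonneg (indicator (A n)) x) * indicator E x \<partial>M) = ennreal (measure M E)"
    by (simp add: integral_eq)
  have "(\<integral>\<^sup>+x. (SUP n. ennreal (T_nonneg (indicator (A n)) x)) * indicator E x \<partial>M)
      = (\<integral>\<^sup>+x. (SUP n. ennreal (T_nonneg (indicator (A n)) x) * indicator E x) \<partial>M)"
    by (simp add: SUP_mult_right_ennreal)
  also have "\<dots> = (SUP n. \<integral>\<^sup>+x. ennreal (T_nonneg (indicator (A n)) x) * indicator E x \<partial>M)"
    by (intro nn_integral_monotone_convergence_SUP_AE mono) simp
  also have "\<dots> = emeasure M E"
    using SUP_eq E by (simp add: emeasure_eq_ennreal_measure less_top)
  finally show ?thesis .
qed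

text \<open>This is where the limit condition on \<open>D\<close> enters: it says that \<open>T \<chi>\<^bsub>A n\<^esub> \<up> 1\<close> weakly,
  and monotonicity turns this into convergence almost everywhere.\<close>
lemma SUP_T_nonneg_indicator_eq_1: "AE x in M. (SUP n. ennreal (T_nonneg (indicator (A n)) x)) = 1"
proof -
  have [measurable]: "T_nonneg (indicator (A n)) \<in> borel_measurable M" for n
    using nonneg_integrable_indicator[OF A_sets A_finite] by measurable
  have le_1: "AE x in M. (SUP n. ennreal (T_nonneg (indicator (A n)) x)) \<le> 1"
    by (rule AE_le_if_nn_set_integral_le) (simp_all add: nn_set_integral_SUP_T_nonneg_indicator)
  have "AE x in M. 1 \<le> (SUP n. ennreal (T_nonneg (indicator (A n)) x))"
    using le_1 by (intro AE_le_if_nn_set_integral_le)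
      (auto simp: nn_set_integral_SUP_T_nonneg_indicator elim!: eventually_mono intro: le_less_trans)
  with le_1 show ?thesis
    by eventually_elim simp
qed

lemma SUP_indicator_A:
  assumes "x \<in> space M"
  shows "(SUP n. ennreal (indicator (A n) x)) = 1"
proof -
  obtain n where "x \<in> A n"
    using assms A_cover by auto
  then have "1 \<le> (SUP n. ennreal (indicator (A n) x))"
    by (intro SUP_upper2[of n]) auto
  moreover have "(SUP n. ennreal (indicator (A n) x)) \<le> 1"
    by (intro SUP_least) (auto split: split_indicator)
  ultimately show ?thesis
    by simp
qed

lemma nn_integral_T_adjoint_nonneg:
  assumes g[measurable]: "g \<in> borel_measurable M" and C: "0 \<le> C" and g_le: "AE x in M. g x \<le> C"
  shows "(\<integral>\<^sup>+x. ennreal (T_adjoint_nonneg g x) \<partial>M) = (\<integral>\<^sup>+x. ennreal (g x) \<partial>M)"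
proof -
  have A_int: "nonneg_integrable M (indicator (A n))" for n
    using nonneg_integrable_indicator[OF A_sets A_finite] .
  have [measurable]: "A n \<in> sets M" "T_nonneg (indicator (A n)) \<in> borel_measurable M" for n
    using A_sets A_int by measurable
  have "(\<integral>\<^sup>+x. ennreal (T_adjoint_nonneg g x) \<partial>M)
      = (\<integral>\<^sup>+x. (SUP n. ennreal (T_adjoint_nonneg g x) * ennreal (indicator (A n) x)) \<partial>M)"
    by (intro nn_integral_cong) (simp add: SUP_mult_left_ennreal[symmetric] SUP_indicator_A)
  also have "\<dots> = (SUP n. \<integral>\<^sup>+x. ennreal (T_adjoint_nonneg g x) * ennreal (indicator (A n) x) \<partial>M)"
  proof (rule nn_integral_monotone_convergence_SUP)
    show "incseq (\<lambda>n x. ennreal (T_adjoint_nonneg g x) * ennreal (indicator (A n) x))"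
      using A_incseq by (auto simp: incseq_Suc_iff le_fun_def split: split_indicator)
  qed measurable
  also have "\<dots> = (SUP n. \<integral>\<^sup>+x. ennreal (g x) * ennreal (T_nonneg (indicator (A n)) x) \<partial>M)"
    using nn_integral_T_adjoint_nonneg_mult[OF g C g_le A_int] by simp
  also have "\<dots> = (\<integral>\<^sup>+x. (SUP n. ennreal (g x) * ennreal (T_nonneg (indicator (A n)) x)) \<partial>M)"
  proof (rule nn_integral_monotone_convergence_SUP_AE[symmetric])
    show "AE x in M. ennreal (g x) * ennreal (T_nonneg (indicator (A n)) x)
        \<le> ennreal (g x) * ennreal (T_nonneg (indicator (A (Suc n))) x)" for n
      using T_nonneg_indicator_A_mono[of n] by eventually_elim (auto intro!: mult_left_mono ennreal_leI)
  qed measurable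
  also have "\<dots> = (\<integral>\<^sup>+x. ennreal (g x) \<partial>M)"
    using SUP_T_nonneg_indicator_eq_1
    by (intro nn_integral_cong_AE) (auto elim!: eventually_mono simp: SUP_mult_left_ennreal[symmetric])
  finally show ?thesis .
qed

lemma integral_T_adjoint_nonneg_mult_nonneg:
  assumes g[measurable]: "g \<in> borel_measurable M" and C: "0 \<le> C" and g_le: "AE x in M. g x \<le> C"
    and F: "nonneg_integrable M F"
  shows "(\<integral>x. T_adjoint_nonneg g x * F x \<partial>M) = (\<integral>x. pos_part g x * T_nonneg F x \<partial>M)"
proof -
  have S_bound: "AE x in M. \<bar>T_adjoint_nonneg g x\<bar> \<le> C"
    using T_adjoint_nonneg_le[OF g C g_le] by eventually_elim simp
  have g_bound: "AE x in M. \<bar>pos_part g x\<bar> \<le> C"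
    using g_le C by (auto elim!: eventually_mono simp: pos_part_def)
  have "ennreal (\<integral>x. T_adjoint_nonneg g x * F x \<partial>M) = (\<integral>\<^sup>+x. ennreal (T_adjoint_nonneg g x) * ennreal (F x) \<partial>M)"
    using nonneg_integrableD(2)[OF F] integrable_bounded_mult[OF _ S_bound nonneg_integrableD(1)[OF F]]
    by (subst nn_integral_eq_integral[symmetric]) (auto intro!: nn_integral_cong simp: ennreal_mult)
  also have "\<dots> = (\<integral>\<^sup>+x. ennreal (g x) * ennreal (T_nonneg F x) \<partial>M)"
    by (rule nn_integral_T_adjoint_nonneg_mult[OF g C g_le F])
  also have "\<dots> = ennreal (\<integral>x. pos_part g x * T_nonneg F x \<partial>M)"
    using integrable_bounded_mult[OF _ g_bound integrable_T_nonneg[OF F]]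
    by (subst nn_integral_eq_integral[symmetric])
      (auto intro!: nn_integral_cong simp: ennreal_mult ennreal_pos_part)
  finally show ?thesis
    using nonneg_integrableD(2)[OF F]
    by (subst (asm) ennreal_inj) (auto intro!: integral_nonneg_AE)
qed

lemma integral_T_adjoint_nonneg_mult:
  assumes g[measurable]: "g \<in> borel_measurable M" and C: "0 \<le> C" and g_le: "AE x in M. g x \<le> C"
    and f: "integrable M f"
  shows "(\<integral>x. T_adjoint_nonneg g x * f x \<partial>M) = (\<integral>x. pos_part g x * T f x \<partial>M)"
proof -
  have S_bound: "AE x in M. \<bar>T_adjoint_nonneg g x\<bar> \<le> C"
    using T_adjoint_nonneg_le[OF g C g_le] by eventually_elim simp
  have g_bound: "AE x in M. \<bar>pos_part g x\<bar> \<le> C"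
    using g_le C by (auto elim!: eventually_mono simp: pos_part_def)
  have f_split: "(\<lambda>x. T_adjoint_nonneg g x * f x)
      = (\<lambda>x. T_adjoint_nonneg g x * pos_part f x - T_adjoint_nonneg g x * neg_part f x)"
    by (simp add: right_diff_distrib[symmetric] pos_part_minus_neg_part)
  have Tf_split: "(\<lambda>x. pos_part g x * T f x)
      = (\<lambda>x. pos_part g x * T_nonneg (pos_part f) x - pos_part g x * T_nonneg (neg_part f) x)"
    by (simp add: T_def right_diff_distrib)
  have "(\<integral>x. T_adjoint_nonneg g x * f x \<partial>M)
      = (\<integral>x. T_adjoint_nonneg g x * pos_part f x \<partial>M) - (\<integral>x. T_adjoint_nonneg g x * neg_part f x \<partial>M)"
    unfolding f_split using f
    by (intro Bochner_Integration.integral_diff integrable_bounded_mult[OF _ S_bound]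
        integrable_pos_part integrable_neg_part) auto
  also have "\<dots> = (\<integral>x. pos_part g x * T_nonneg (pos_part f) x \<partial>M)
      - (\<integral>x. pos_part g x * T_nonneg (neg_part f) x \<partial>M)"
    using f by (simp add: integral_T_adjoint_nonneg_mult_nonneg[OF g C g_le] nonneg_integrable_pos_part
        nonneg_integrable_neg_part)
  also have "\<dots> = (\<integral>x. pos_part g x * T f x \<partial>M)"
  proof -
    have "integrable M (\<lambda>x. pos_part g x * T_nonneg (pos_part f) x)"
      by (rule integrable_bounded_mult[OF borel_measurable_pos_part[OF g] g_bound
          integrable_T_nonneg[OF nonneg_integrable_pos_part[OF f]]])
    moreover have "integrable M (\<lambda>x. pos_part g x * T_nonneg (neg_part f) x)"
      by (rule integrable_bounded_mult[OF borel_measurable_pos_part[OF g] g_bound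
          integrable_T_nonneg[OF nonneg_integrable_neg_part[OF f]]])
    ultimately show ?thesis
      unfolding Tf_split by (rule Bochner_Integration.integral_diff[symmetric])
  qed
  finally show ?thesis .
qed

lemma integral_T_adjoint_nonneg_eq_pos_part:
  assumes h[measurable]: "h \<in> borel_measurable M" and C: "0 \<le> C" and h_le: "AE x in M. h x \<le> C"
    and h_int: "integrable M h"
  shows "integrable M (T_adjoint_nonneg h)" "(\<integral>x. T_adjoint_nonneg h x \<partial>M) = (\<integral>x. pos_part h x \<partial>M)"
proof -
  have nn_eq: "(\<integral>\<^sup>+x. ennreal (T_adjoint_nonneg h x) \<partial>M) = ennreal (\<integral>x. pos_part h x \<partial>M)"
    using nn_integral_T_adjoint_nonneg[OF h C h_le]
      nn_integral_eq_integral[OF integrable_pos_part[OF h_int]] by (simp add: ennreal_pos_part)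
  show S_int: "integrable M (T_adjoint_nonneg h)"
    using nn_eq by (intro integrableI_nonneg) auto
  have "ennreal (\<integral>x. T_adjoint_nonneg h x \<partial>M) = ennreal (\<integral>x. pos_part h x \<partial>M)"
    using nn_integral_eq_integral[OF S_int] nn_eq by simp
  then show "(\<integral>x. T_adjoint_nonneg h x \<partial>M) = (\<integral>x. pos_part h x \<partial>M)"
    by (subst (asm) ennreal_inj) (auto intro!: integral_nonneg_AE)
qed

definition T_adjoint :: "('a \<Rightarrow> real) \<Rightarrow> 'a \<Rightarrow> real" where
  "T_adjoint g x = T_adjoint_nonneg g x - T_adjoint_nonneg (\<lambda>y. - g y) x"

lemma integral_T_adjoint_mult:
  assumes g: "linf M g" and f: "integrable M f"
  shows "(\<integral>x. T_adjoint g x * f x \<partial>M) = (\<integral>x. g x * T f x \<partial>M)"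
proof -
  obtain C where C: "0 \<le> C" and g_le: "AE x in M. g x \<le> C" and neg_g_le: "AE x in M. - g x \<le> C"
    using g by (rule linf_bounds)
  have g_meas[measurable]: "g \<in> borel_measurable M"
    using g by (simp add: linf_def)
  have S_bound: "AE x in M. \<bar>T_adjoint_nonneg h x\<bar> \<le> C" if "h \<in> borel_measurable M" "AE x in M. h x \<le> C" for h
    using T_adjoint_nonneg_le[OF that(1) C that(2)] by eventually_elim simp
  have "(\<integral>x. T_adjoint g x * f x \<partial>M)
      = (\<integral>x. T_adjoint_nonneg g x * f x \<partial>M) - (\<integral>x. T_adjoint_nonneg (\<lambda>y. - g y) x * f x \<partial>M)"
    unfolding T_adjoint_def left_diff_distrib
    using integrable_bounded_mult[OF _ S_bound f] g_le neg_g_le by simp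
  also have "\<dots> = (\<integral>x. pos_part g x * T f x \<partial>M) - (\<integral>x. neg_part g x * T f x \<partial>M)"
    using integral_T_adjoint_nonneg_mult[OF g_meas C g_le f]
      integral_T_adjoint_nonneg_mult[OF _ C neg_g_le f] by (simp add: pos_part_uminus)
  also have "\<dots> = (\<integral>x. g x * T f x \<partial>M)"
  proof -
    have "AE x in M. \<bar>pos_part g x\<bar> \<le> C" "AE x in M. \<bar>neg_part g x\<bar> \<le> C"
      using g_le neg_g_le C by (auto elim!: eventually_mono simp: pos_part_def neg_part_def)
    then have "integrable M (\<lambda>x. pos_part g x * T f x)" "integrable M (\<lambda>x. neg_part g x * T f x)"
      by (auto intro!: integrable_bounded_mult integrable_T f)
    then show ?thesis
      by (simp add: Bochner_Integration.integral_diff[symmetric] left_diff_distrib[symmetric]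
          pos_part_minus_neg_part)
  qed
  finally show ?thesis .
qed

lemma linf_T_adjoint:
  assumes g: "linf M g"
  shows "linf M (T_adjoint g)"
proof -
  obtain C where C: "0 \<le> C" and g_le: "AE x in M. g x \<le> C" and neg_g_le: "AE x in M. - g x \<le> C"
    using g by (rule linf_bounds)
  have g_meas[measurable]: "g \<in> borel_measurable M"
    using g by (simp add: linf_def)
  have neg_g_meas: "(\<lambda>x. - g x) \<in> borel_measurable M"
    by measurable
  from T_adjoint_nonneg_le[OF g_meas C g_le] T_adjoint_nonneg_le[OF neg_g_meas C neg_g_le]
  have "AE x in M. \<bar>T_adjoint g x\<bar> \<le> C"
  proof eventually_elim
    case (elim x)
    with T_adjoint_nonneg_nonneg[of g x] T_adjoint_nonneg_nonneg[of "\<lambda>y. - g y" x] show ?case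
      unfolding T_adjoint_def abs_le_iff by linarith
  qed
  then show ?thesis
    unfolding linf_def T_adjoint_def[abs_def] by auto
qed

lemma integral_T_adjoint:
  assumes g: "linf M g" and g_int: "integrable M g"
  shows "integrable M (T_adjoint g)" "(\<integral>x. T_adjoint g x \<partial>M) = (\<integral>x. g x \<partial>M)"
proof -
  obtain C where C: "0 \<le> C" and g_le: "AE x in M. g x \<le> C" and neg_g_le: "AE x in M. - g x \<le> C"
    using g by (rule linf_bounds)
  have g_meas[measurable]: "g \<in> borel_measurable M"
    using g by (simp add: linf_def)
  have neg_g_meas: "(\<lambda>x. - g x) \<in> borel_measurable M"
    by measurable
  note pos = integral_T_adjoint_nonneg_eq_pos_part[OF g_meas C g_le g_int]
  note neg = integral_T_adjoint_nonneg_eq_pos_part[OF neg_g_meas C neg_g_le, unfolded pos_part_uminus]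
  show "integrable M (T_adjoint g)"
    unfolding T_adjoint_def[abs_def] using pos neg g_int by simp
  have "(\<integral>x. T_adjoint g x \<partial>M) = (\<integral>x. pos_part g x \<partial>M) - (\<integral>x. neg_part g x \<partial>M)"
    unfolding T_adjoint_def using pos neg g_int by (simp add: Bochner_Integration.integral_diff)
  then show "(\<integral>x. T_adjoint g x \<partial>M) = (\<integral>x. g x \<partial>M)"
    using integral_pos_part_minus_neg_part[OF g_int] by simp
qed

lemma nn_integral_T_adjoint:
  assumes g: "linf M g" and g_nonneg: "AE x in M. 0 \<le> g x"
  shows "(\<integral>\<^sup>+x. ennreal (T_adjoint g x) \<partial>M) = (\<integral>\<^sup>+x. ennreal (g x) \<partial>M)"
proof -
  obtain C where C: "0 \<le> C" and g_le: "AE x in M. g x \<le> C" and neg_g_le: "AE x in M. - g x \<le> C"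
    using g by (rule linf_bounds)
  have [measurable]: "g \<in> borel_measurable M"
    using g by (simp add: linf_def)
  have "(\<integral>\<^sup>+x. ennreal (T_adjoint_nonneg (\<lambda>y. - g y) x) \<partial>M) = (\<integral>\<^sup>+x. ennreal (- g x) \<partial>M)"
    by (rule nn_integral_T_adjoint_nonneg[OF _ C neg_g_le]) simp
  also have "\<dots> = 0"
    using g_nonneg by (subst nn_integral_0_iff_AE) (auto elim!: eventually_mono simp: ennreal_neg)
  finally have "AE x in M. T_adjoint_nonneg (\<lambda>y. - g y) x = 0"
    by (subst (asm) nn_integral_0_iff_AE)
      (auto elim!: eventually_mono simp: ennreal_eq_0_iff intro: order_antisym)
  then have "(\<integral>\<^sup>+x. ennreal (T_adjoint g x) \<partial>M) = (\<integral>\<^sup>+x. ennreal (T_adjoint_nonneg g x) \<partial>M)"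
    by (intro nn_integral_cong_AE) (auto elim!: eventually_mono simp: T_adjoint_def)
  also have "\<dots> = (\<integral>\<^sup>+x. ennreal (g x) \<partial>M)"
    by (rule nn_integral_T_adjoint_nonneg[OF _ C g_le]) simp
  finally show ?thesis .
qed

lemma l1_adjoint_T_adjoint: "l1_adjoint M T T_adjoint"
  unfolding l1_adjoint_def using linf_T_adjoint integral_T_adjoint_mult by auto

lemma doubly_stochastic_T: "doubly_stochastic M T"
proof -
  have "(\<integral>\<^sup>+x. ennreal (T_adjoint (indicator E) x) \<partial>M) \<le> emeasure M E"
    if "E \<in> sets M" for E
    using that by (simp add: nn_integral_T_adjoint linf_indicator ennreal_indicator)
  then show ?thesis
    unfolding doubly_stochastic_def semi_doubly_stochastic_def
    using markov_operator_T l1_adjoint_T_adjoint integral_T_adjoint nn_integral_T_adjoint by blast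
qed

end

lemma (in linear_on_simple_L1) conditions_if_doubly_stochastic_extension:
  assumes T': "doubly_stochastic M T'" and ext: "\<forall>f\<in>simple_L1 M. AE x in M. T' f x = D f x"
    and A: "\<And>n. A n \<in> sets M" "\<And>n. emeasure M (A n) < \<infinity>" "incseq A" "(\<Union>n. A n) = space M"
  shows "f \<in> simple_L1 M \<Longrightarrow> (AE x in M. 0 \<le> f x) \<Longrightarrow> (AE x in M. 0 \<le> D f x)"
    and "E \<in> sets M \<Longrightarrow> emeasure M E < \<infinity> \<Longrightarrow> (\<integral>x. D (indicator E) x \<partial>M) = measure M E"
    and "E \<in> sets M \<Longrightarrow> emeasure M E < \<infinity> \<Longrightarrow>
      (\<lambda>n. \<integral>x. indicator E x * D (indicator (A n)) x \<partial>M) \<longlonglongrightarrow> measure M E"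
proof -
  have markov: "markov_operator M T'"
    using T' by (rule doubly_stochastic_markov_operator)
  have T'_meas: "f \<in> simple_L1 M \<Longrightarrow> T' f \<in> borel_measurable M" for f
    using markov by (auto simp: markov_operator_def l1_operator_def simple_L1_def)
  have ext_integral: "f \<in> simple_L1 M \<Longrightarrow> (\<integral>x. h x * D f x \<partial>M) = (\<integral>x. h x * T' f x \<partial>M)"
    if "h \<in> borel_measurable M" for f h
    using ext that T'_meas by (intro integral_cong_AE) (auto elim!: eventually_mono)
  show "AE x in M. 0 \<le> D f x" if "f \<in> simple_L1 M" "AE x in M. 0 \<le> f x"
  proof -
    have "AE x in M. 0 \<le> T' f x"
      using markov that by (auto simp: markov_operator_def simple_L1_def)
    with ext that(1) show ?thesis
      by (auto elim: AE_mp)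
  qed
  show "(\<integral>x. D (indicator E) x \<partial>M) = measure M E" if E: "E \<in> sets M" "emeasure M E < \<infinity>"
    using ext_integral[OF borel_measurable_const simple_L1_indicator[OF E], of 1]
      markov_operator_integral_indicator[OF markov E] by simp
  show "(\<lambda>n. \<integral>x. indicator E x * D (indicator (A n)) x \<partial>M) \<longlonglongrightarrow> measure M E"
    if E: "E \<in> sets M" "emeasure M E < \<infinity>"
    using doubly_stochastic_indicator_lim[OF T' A E] E(1)
    by (simp add: ext_integral simple_L1_indicator[OF A(1,2)])
qed

theorem theorem3p1:
  fixes M :: "'a measure" and A :: "nat \<Rightarrow> 'a set"
    and D :: "('a \<Rightarrow> real) \<Rightarrow> ('a \<Rightarrow> real)"
  assumes sf: "sigma_finite_measure M"
    and A_sets: "\<And>n. A n \<in> sets M"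
    and A_fin: "\<And>n. emeasure M (A n) < \<infinity>"
    and A_mono: "\<And>n. A n \<subseteq> A (Suc n)"
    and A_cover: "(\<Union>n. A n) = space M"
    and D_L1: "\<And>f. f \<in> simple_L1 M \<Longrightarrow> integrable M (D f)"
    and D_welldef: "\<And>f g. f \<in> simple_L1 M \<Longrightarrow> g \<in> simple_L1 M \<Longrightarrow>
        (AE x in M. f x = g x) \<Longrightarrow> (AE x in M. D f x = D g x)"
    and D_add: "\<And>f g. f \<in> simple_L1 M \<Longrightarrow> g \<in> simple_L1 M \<Longrightarrow>
        (AE x in M. D (\<lambda>y. f y + g y) x = D f x + D g x)"
    and D_scale: "\<And>f c. f \<in> simple_L1 M \<Longrightarrow>
        (AE x in M. D (\<lambda>y. c * f y) x = c * D f x)"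
  shows "((\<exists>T. doubly_stochastic M T \<and> (\<forall>f\<in>simple_L1 M. AE x in M. T f x = D f x)) \<and>
          (\<forall>T1 T2. doubly_stochastic M T1 \<and> (\<forall>f\<in>simple_L1 M. AE x in M. T1 f x = D f x) \<and>
                   doubly_stochastic M T2 \<and> (\<forall>f\<in>simple_L1 M. AE x in M. T2 f x = D f x) \<longrightarrow>
                   (\<forall>f. integrable M f \<longrightarrow> (AE x in M. T1 f x = T2 f x))))
     \<longleftrightarrow>
         ((\<forall>f\<in>simple_L1 M. (AE x in M. 0 \<le> f x) \<longrightarrow> (AE x in M. 0 \<le> D f x)) \<and>
          (\<forall>E\<in>sets M. emeasure M E < \<infinity> \<longrightarrow>
             (\<integral>x. D (indicator E) x \<partial>M) = measure M E \<and>
             (\<lambda>n. \<integral>x. indicator E x * D (indicator (A n)) x \<partial>M) \<longlonglongrightarrow> measure M E))"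
  (is "?extension \<longleftrightarrow> ?conditions")
proof -
  interpret linear_on_simple_L1 M D
    using D_L1 D_welldef D_add D_scale by unfold_locales
  have A_incseq: "incseq A"
    using A_mono by (rule incseq_SucI)
  show ?thesis
  proof
    assume ?extension
    then obtain T' where "doubly_stochastic M T'" "\<forall>f\<in>simple_L1 M. AE x in M. T' f x = D f x"
      by blast
    from conditions_if_doubly_stochastic_extension[OF this A_sets A_fin A_incseq A_cover]
    show ?conditions
      by blast
  next
    assume conditions: ?conditions
    interpret stochastic_on_simple_L1 M D A
    proof (intro stochastic_on_simple_L1.intro markov_on_simple_L1.intro
        stochastic_on_simple_L1_axioms.intro markov_on_simple_L1_axioms.intro)
      show "linear_on_simple_L1 M D"
        using D_L1 D_welldef D_add D_scale by unfold_locales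
    qed (use sf conditions A_sets A_fin A_incseq A_cover in auto)
    show ?extension
    proof (intro conjI allI impI)
      show "\<exists>T. doubly_stochastic M T \<and> (\<forall>f\<in>simple_L1 M. AE x in M. T f x = D f x)"
        using doubly_stochastic_T T_simple_L1 by blast
      fix T1 T2 and f :: "'a \<Rightarrow> real"
      assume "doubly_stochastic M T1 \<and> (\<forall>f\<in>simple_L1 M. AE x in M. T1 f x = D f x) \<and>
        doubly_stochastic M T2 \<and> (\<forall>f\<in>simple_L1 M. AE x in M. T2 f x = D f x)" "integrable M f"
      then show "AE x in M. T1 f x = T2 f x"
        using markov_extensions_agree[of T1 T2 f] doubly_stochastic_markov_operator[of M T1]
          doubly_stochastic_markov_operator[of M T2] by blast
    qed
  qed
qed

end
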